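(* (1) $U_{K,L,twist}$, with the bialgebra structure of the context and the antihomomorphism $\mathsf{S}$ given by $\mathsf{S}(K)=\overline{K}$, $\mathsf{S}(\overline{K})=K$, $\mathsf{S}(L)=\overline{L}$, $\mathsf{S}(\overline{L})=L$, $\mathsf{S}(E)=-E(\overline{K}+\overline{L})$, $\mathsf{S}(F)=-(K+L)F$, is a Hopf algebra with antipode $\mathsf{S}$, i.e. $\mathsf{S}\star\mathsf{id}=\mathsf{id}\star\mathsf{S}=\eta\circ\varepsilon$. (2) $U_{K,L,norm}$, with the bialgebra structure of the context and the antihomomorphism $\mathsf{T}$ given by the same formulas ($\mathsf{T}(K)=\overline{K}$, $\mathsf{T}(\overline{K})=K$, $\mathsf{T}(L)=\overline{L}$, $\mathsf{T}(\overline{L})=L$, $\mathsf{T}(E)=-E(\overline{K}+\overline{L})$, $\mathsf{T}(F)=-(K+L)F$), is a von Neumann–Hopf algebra, i.e. $\mathsf{id}\star\mathsf{T}\star\mathsf{id}=\mathsf{id}$ and $\mathsf{T}\star\mathsf{id}\star\mathsf{T}=\mathsf{T}$.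
   Context: Fix $q\in\mathbb{C}$, $q\neq 0,\pm1$. Both $U_{K,L,norm}$ and $U_{K,L,twist}$ are unital associative $\mathbb{C}$-algebras generated by $K,\overline{K},L,\overline{L},E,F$ subject to the common relations $K\overline{K}K=K$, $\overline{K}K\overline{K}=\overline{K}$, $K\overline{K}=\overline{K}K$, $L\overline{L}L=L$, $\overline{L}L\overline{L}=\overline{L}$, $L\overline{L}=\overline{L}L$, $K\overline{K}+L\overline{L}=\mathbf{1}$, $EF-FE=\frac{(K+L)-(\overline{K}+\overline{L})}{q-q^{-1}}$, together with: for $U_{K,L,norm}$: $KE=q^2EK$, $LE=q^2EL$, $\overline{K}E=q^{-2}E\overline{K}$, $\overline{L}E=q^{-2}E\overline{L}$, $KF=q^{-2}FK$, $LF=q^{-2}FL$, $\overline{K}F=q^2F\overline{K}$, $\overline{L}F=q^2F\overline{L}$; for $U_{K,L,twist}$: $KE=q^2EL$, $LE=q^2EK$, $\overline{K}E=q^{-2}E\overline{L}$, $\overline{L}E=q^{-2}E\overline{K}$, $KF=q^{-2}FL$, $LF=q^{-2}FK$, $\overline{K}F=q^2F\overline{L}$, $\overline{L}F=q^2F\overline{K}$. Bialgebra structures: in both algebras $\Delta(E)=\mathbf{1}\otimes E+E\otimes(K+L)$, $\Delta(F)=F\otimes\mathbf{1}+(\overline{K}+\overline{L})\otimes F$, $\varepsilon(K)=\varepsilon(\overline{K})=1$, $\varepsilon(L)=\varepsilon(\overline{L})=\varepsilon(E)=\varepsilon(F)=0$; in $U_{K,L,norm}$: $\Delta(K)=K\otimes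 K$, $\Delta(\overline{K})=\overline{K}\otimes\overline{K}$, $\Delta(L)=L\otimes L+L\otimes K+K\otimes L$, $\Delta(\overline{L})=\overline{L}\otimes\overline{L}+\overline{L}\otimes\overline{K}+\overline{K}\otimes\overline{L}$; in $U_{K,L,twist}$: $\Delta(K)=K\otimes K+L\otimes L$, $\Delta(\overline{K})=\overline{K}\otimes\overline{K}+\overline{L}\otimes\overline{L}$, $\Delta(L)=L\otimes K+K\otimes L$, $\Delta(\overline{L})=\overline{L}\otimes\overline{K}+\overline{K}\otimes\overline{L}$ (each extended to algebra homomorphisms). Convolution: $A\star B=\mu\circ(A\otimes B)\circ\Delta$; $\eta(\lambda)=\lambda\mathbf{1}$. *)

theory Defs
  imports Complex_Main "HOL-Library.Poly_Mapping" "HOL-Library.Product_Plus"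
begin

datatype gen = GK | GKb | GL | GLb | GE | GF

text \<open>Words in the generators form the free monoid (concatenation written as +).\<close>
datatype word = Wd "gen list"

fun letters :: "word \<Rightarrow> gen list" where "letters (Wd xs) = xs"

instantiation word :: monoid_add
begin
definition zero_word_def: "0 = Wd []"
definition plus_word_def: "a + b = Wd (letters a @ letters b)"
instance
  by standard (cases rule: word.exhaust, auto simp: zero_word_def plus_word_def
      elim!: word.exhaust[of _ "_"] ; (metis letters.simps word.exhaust))+
end

text \<open>Free associative unital C-algebra on gen, and its tensor square
  (basis: pairs of words, multiplication componentwise).\<close>
type_synonym fa = "word \<Rightarrow>\<^sub>0 complex"
type_synonym ta = "(word \<times> word) \<Rightarrow>\<^sub>0 complex"

definition cst :: "complex \<Rightarrow> ('k::monoid_add \<Rightarrow>\<^sub>0 complex)" where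
  "cst c = Poly_Mapping.single 0 c"

definition gn :: "gen \<Rightarrow> fa" where "gn x = Poly_Mapping.single (Wd [x]) 1"

abbreviation "K \<equiv> gn GK"
abbreviation "Kb \<equiv> gn GKb"
abbreviation "L \<equiv> gn GL"
abbreviation "Lb \<equiv> gn GLb"
abbreviation "E \<equiv> gn GE"
abbreviation "F \<equiv> gn GF"

inductive_set ideal_gen :: "'a::ring_1 set \<Rightarrow> 'a set" for R where
  base: "r \<in> R \<Longrightarrow> r \<in> ideal_gen R"
| zero: "0 \<in> ideal_gen R"
| add: "a \<in> ideal_gen R \<Longrightarrow> b \<in> ideal_gen R \<Longrightarrow> a + b \<in> ideal_gen R"
| lmul: "a \<in> ideal_gen R \<Longrightarrow> x * a \<in> ideal_gen R"
| rmul: "a \<in> ideal_gen R \<Longrightarrow> a * x \<in> ideal_gen R"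

definition common_rels :: "complex \<Rightarrow> fa set" where
  "common_rels q = {K * Kb * K - K, Kb * K * Kb - Kb, K * Kb - Kb * K,
     L * Lb * L - L, Lb * L * Lb - Lb, L * Lb - Lb * L,
     K * Kb + L * Lb - 1,
     E * F - F * E - cst (1 / (q - inverse q)) * ((K + L) - (Kb + Lb))}"

definition norm_rels :: "complex \<Rightarrow> fa set" where
  "norm_rels q = common_rels q \<union>
    {K * E - cst (q^2) * E * K, L * E - cst (q^2) * E * L,
     Kb * E - cst (inverse (q^2)) * E * Kb, Lb * E - cst (inverse (q^2)) * E * Lb,
     K * F - cst (inverse (q^2)) * F * K, L * F - cst (inverse (q^2)) * F * L,
     Kb * F - cst (q^2) * F * Kb, Lb * F - cst (q^2) * F * Lb}"

definition twist_rels :: "complex \<Rightarrow> fa set" where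
  "twist_rels q = common_rels q \<union>
    {K * E - cst (q^2) * E * L, L * E - cst (q^2) * E * K,
     Kb * E - cst (inverse (q^2)) * E * Lb, Lb * E - cst (inverse (q^2)) * E * Kb,
     K * F - cst (inverse (q^2)) * F * L, L * F - cst (inverse (q^2)) * F * K,
     Kb * F - cst (q^2) * F * Lb, Lb * F - cst (q^2) * F * Kb}"

text \<open>The defining ideals: U_norm = fa / I_norm, U_twist = fa / I_twist.\<close>
definition I_norm :: "complex \<Rightarrow> fa set" where "I_norm q = ideal_gen (norm_rels q)"
definition I_twist :: "complex \<Rightarrow> fa set" where "I_twist q = ideal_gen (twist_rels q)"

definition lin_ext :: "(word \<Rightarrow> ('k::monoid_add \<Rightarrow>\<^sub>0 complex)) \<Rightarrow> fa \<Rightarrow> ('k \<Rightarrow>\<^sub>0 complex)" where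
  "lin_ext f p = (\<Sum>w\<in>Poly_Mapping.keys p. cst (Poly_Mapping.lookup p w) * f w)"

definition hom_ext :: "(gen \<Rightarrow> ('k::monoid_add \<Rightarrow>\<^sub>0 complex)) \<Rightarrow> fa \<Rightarrow> ('k \<Rightarrow>\<^sub>0 complex)" where
  "hom_ext \<phi> = lin_ext (\<lambda>w. prod_list (map \<phi> (letters w)))"

definition antihom_ext :: "(gen \<Rightarrow> fa) \<Rightarrow> fa \<Rightarrow> fa" where
  "antihom_ext \<phi> = lin_ext (\<lambda>w. prod_list (map \<phi> (rev (letters w))))"

definition counit_ext :: "(gen \<Rightarrow> complex) \<Rightarrow> fa \<Rightarrow> complex" where
  "counit_ext e p = (\<Sum>w\<in>Poly_Mapping.keys p. Poly_Mapping.lookup p w * prod_list (map e (letters w)))"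

definition tens :: "fa \<Rightarrow> fa \<Rightarrow> ta" where
  "tens a b = (\<Sum>u\<in>Poly_Mapping.keys a. \<Sum>v\<in>Poly_Mapping.keys b. Poly_Mapping.single (u, v) (Poly_Mapping.lookup a u * Poly_Mapping.lookup b v))"

definition tmap :: "(fa \<Rightarrow> fa) \<Rightarrow> (fa \<Rightarrow> fa) \<Rightarrow> ta \<Rightarrow> ta" where
  "tmap A B t = (\<Sum>uv\<in>Poly_Mapping.keys t. cst (Poly_Mapping.lookup t uv) *
      tens (A (Poly_Mapping.single (fst uv) 1)) (B (Poly_Mapping.single (snd uv) 1)))"

definition mu :: "ta \<Rightarrow> fa" where
  "mu t = (\<Sum>uv\<in>Poly_Mapping.keys t. Poly_Mapping.single (fst uv + snd uv) (Poly_Mapping.lookup t uv))"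

definition eta :: "complex \<Rightarrow> fa" where "eta c = cst c"

definition conv :: "(fa \<Rightarrow> ta) \<Rightarrow> (fa \<Rightarrow> fa) \<Rightarrow> (fa \<Rightarrow> fa) \<Rightarrow> fa \<Rightarrow> fa" where
  "conv \<Delta> A B x = mu (tmap A B (\<Delta> x))"

fun delta_norm_gen :: "gen \<Rightarrow> ta" where
  "delta_norm_gen GK = tens K K"
| "delta_norm_gen GKb = tens Kb Kb"
| "delta_norm_gen GL = tens L L + tens L K + tens K L"
| "delta_norm_gen GLb = tens Lb Lb + tens Lb Kb + tens Kb Lb"
| "delta_norm_gen GE = tens 1 E + tens E (K + L)"
| "delta_norm_gen GF = tens F 1 + tens (Kb + Lb) F"

fun delta_twist_gen :: "gen \<Rightarrow> ta" where
  "delta_twist_gen GK = tens K K + tens L L"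
| "delta_twist_gen GKb = tens Kb Kb + tens Lb Lb"
| "delta_twist_gen GL = tens L K + tens K L"
| "delta_twist_gen GLb = tens Lb Kb + tens Kb Lb"
| "delta_twist_gen GE = tens 1 E + tens E (K + L)"
| "delta_twist_gen GF = tens F 1 + tens (Kb + Lb) F"

fun eps_gen :: "gen \<Rightarrow> complex" where
  "eps_gen GK = 1" | "eps_gen GKb = 1" | "eps_gen GL = 0" | "eps_gen GLb = 0"
| "eps_gen GE = 0" | "eps_gen GF = 0"

fun S_gen :: "gen \<Rightarrow> fa" where
  "S_gen GK = Kb" | "S_gen GKb = K" | "S_gen GL = Lb" | "S_gen GLb = L"
| "S_gen GE = - (E * (Kb + Lb))" | "S_gen GF = - ((K + L) * F)"

definition Delta_norm :: "fa \<Rightarrow> ta" where "Delta_norm = hom_ext delta_norm_gen"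
definition Delta_twist :: "fa \<Rightarrow> ta" where "Delta_twist = hom_ext delta_twist_gen"
definition eps :: "fa \<Rightarrow> complex" where "eps = counit_ext eps_gen"
text \<open>The antihomomorphism S (on U_twist) and T (on U_norm), given by the same formulas.\<close>
definition antipode :: "fa \<Rightarrow> fa" where "antipode = antihom_ext S_gen"

end

theory Submission
  imports Defs
begin

text \<open>
  Both algebras are quotients of the free algebra fa on K, Kb, L, Lb, E, F, and every claim
  is a congruence modulo the defining ideal.

  For A
      multiplicative and B antimultiplicative (or vice versa), tmul A B turns multiplication
      by a basis tensor into conjugation; modulo an ideal this makes convolutions computable
      letter by letter along a word, as long as the partial results are central.
  (2) Consequences of the common relations: K Kb and L Lb are complementary idempotents,
      mixed products of the K- and L-corners vanish, and Kb + Lb inverts K + L.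
  (3) The antipode is an antihomomorphism mapping each defining relation into the ideal, so
      it preserves both ideals.
  (4) Twisted algebra: S \<star> id and id \<star> S agree with \<open>\<eta> \<circ> \<epsilon>\<close> on generators; scalars being
      central, induction over words gives the Hopf identities.
  (5) Normal algebra: id \<star> T and T \<star> id agree with the homomorphism \<open>\<chi>\<close> that projects to
      the corner idempotents; these are central in U_norm, and \<open>\<chi> \<star> id = id\<close>,
      \<open>\<chi> \<star> T = T\<close> on generators, whence \<open>id \<star> T \<star> id = id\<close> and \<open>T \<star> id \<star> T = T\<close>.
\<close>

section \<open>Linear maps between spaces of finitely supported functions\<close>

text \<open>Every finitely supported function is the finite sum of its monomials, so a property
  closed under addition and holding for 0 and all monomials holds everywhere.\<close>
lemma poly_mapping_induct [case_names zero single add]: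
  fixes p :: "'a \<Rightarrow>\<^sub>0 'b::comm_monoid_add"
  assumes "P 0" "\<And>k c. P (Poly_Mapping.single k c)" "\<And>a b. P a \<Longrightarrow> P b \<Longrightarrow> P (a + b)"
  shows "P p"
proof -
  have decomp: "p = (\<Sum>k\<in>Poly_Mapping.keys p. Poly_Mapping.single k (Poly_Mapping.lookup p k))"
    by (rule poly_mapping_eqI) (auto simp: lookup_sum lookup_single when_def in_keys_iff)
  have "P (\<Sum>k\<in>A. Poly_Mapping.single k (Poly_Mapping.lookup p k))" if "finite A" for A
    using that by (induction A rule: finite_induct) (auto intro: assms)
  then show ?thesis by (subst decomp) simp
qed

definition basis_vec :: "'k \<Rightarrow> ('k \<Rightarrow>\<^sub>0 complex)" where
  "basis_vec k = Poly_Mapping.single k 1"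

lemma cst_0 [simp]: "cst 0 = 0" by (simp add: cst_def)
lemma cst_1 [simp]: "cst 1 = 1" by (simp add: cst_def)
lemma cst_add: "cst (a + b) = cst a + cst b" by (simp add: cst_def single_add)
lemma cst_mult: "cst a * cst b = cst (a * b)" by (simp add: cst_def mult_single)
lemma cst_sum: "cst (sum f A) = (\<Sum>a\<in>A. cst (f a))"
  by (induction A rule: infinite_finite_induct) (simp_all add: cst_add)
lemma cst_single: "cst c * Poly_Mapping.single k d = Poly_Mapping.single k (c * d)"
  by (simp add: cst_def mult_single)
lemma single_as_cst: "Poly_Mapping.single k c = cst c * basis_vec k"
  by (simp add: cst_def basis_vec_def mult_single)
lemma basis_vec_add: "basis_vec (u + v) = basis_vec u * basis_vec v"
  by (simp add: basis_vec_def mult_single)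
lemma basis_vec_zero: "basis_vec 0 = 1"
  by (simp add: basis_vec_def)

lemma cst_commute: "cst c * x = x * cst c"
  by (induction x rule: poly_mapping_induct)
     (simp_all add: cst_def mult_single distrib_left distrib_right mult.commute)

lemma cst_left_commute: "x * (cst c * y) = cst c * (x * y)"
  by (metis cst_commute mult.assoc)

lemma cst_cst: "cst a * (cst b * y) = cst (a * b) * y"
  by (simp add: cst_mult[symmetric] mult.assoc)

lemma cst_mult_cst: "(cst a * x) * (cst b * y) = cst (a * b) * (x * y)"
  by (simp only: mult.assoc cst_left_commute[of x b y] cst_cst)

text \<open>The linear extension of a map defined on basis vectors.  The library's
  lin_ext is its special case for the free algebra as domain; the tensor
  square needs the general version.\<close>
definition linear_ext ::
    "('a \<Rightarrow> ('k::monoid_add \<Rightarrow>\<^sub>0 complex)) \<Rightarrow> ('a \<Rightarrow>\<^sub>0 complex) \<Rightarrow> ('k \<Rightarrow>\<^sub>0 complex)" where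
  "linear_ext f p = (\<Sum>w\<in>Poly_Mapping.keys p. cst (Poly_Mapping.lookup p w) * f w)"

lemma linear_ext_add: "linear_ext f (p + r) = linear_ext f p + linear_ext f r"
proof -
  let ?S = "Poly_Mapping.keys p \<union> Poly_Mapping.keys r"
  have sum_over_S: "linear_ext f x = (\<Sum>w\<in>?S. cst (Poly_Mapping.lookup x w) * f w)"
    if "Poly_Mapping.keys x \<subseteq> ?S" for x
    unfolding linear_ext_def using that
    by (intro sum.mono_neutral_left) (auto simp: in_keys_iff)
  have "linear_ext f (p + r) = (\<Sum>w\<in>?S. cst (Poly_Mapping.lookup (p + r) w) * f w)"
    by (rule sum_over_S) (auto dest: subsetD[OF keys_add])
  also have "\<dots> = (\<Sum>w\<in>?S. cst (Poly_Mapping.lookup p w) * f w)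
                 + (\<Sum>w\<in>?S. cst (Poly_Mapping.lookup r w) * f w)"
    by (simp add: lookup_add cst_add distrib_right sum.distrib)
  also have "\<dots> = linear_ext f p + linear_ext f r"
    by (simp add: sum_over_S)
  finally show ?thesis .
qed

lemma linear_ext_zero [simp]: "linear_ext f 0 = 0"
  by (simp add: linear_ext_def)
lemma linear_ext_single: "linear_ext f (Poly_Mapping.single k c) = cst c * f k"
  by (simp add: linear_ext_def)
lemma linear_ext_basis_vec [simp]: "linear_ext f (basis_vec k) = f k"
  by (simp add: linear_ext_def basis_vec_def)

lemma linear_ext_uminus: "linear_ext f (- p) = - linear_ext f p"
proof -
  have "linear_ext f (- p) + linear_ext f p = 0"
    by (simp only: linear_ext_add[symmetric] add.left_inverse linear_ext_zero)
  then show ?thesis by (simp add: eq_neg_iff_add_eq_0)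
qed
lemma linear_ext_diff: "linear_ext f (p - r) = linear_ext f p - linear_ext f r"
  by (simp only: diff_conv_add_uminus linear_ext_add linear_ext_uminus)
lemma linear_ext_cst: "linear_ext f (cst c * p) = cst c * linear_ext f p"
proof (induction p rule: poly_mapping_induct)
  case (single k d)
  have "linear_ext f (cst c * Poly_Mapping.single k d) = cst (c * d) * f k"
    by (simp only: cst_single linear_ext_single)
  then show ?case by (simp only: linear_ext_single cst_cst)
qed (simp_all only: linear_ext_add distrib_left mult_zero_right linear_ext_zero)

lemma linear_ext_comp: "linear_ext g (linear_ext f p) = linear_ext (\<lambda>k. linear_ext g (f k)) p"
  by (induction p rule: poly_mapping_induct)
     (simp_all add: linear_ext_add linear_ext_single linear_ext_cst)
lemma linear_ext_fun_add: "linear_ext (\<lambda>k. f k + g k) p = linear_ext f p + linear_ext g p"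
  by (induction p rule: poly_mapping_induct)
     (simp_all add: linear_ext_add linear_ext_single distrib_left)
lemma linear_ext_fun_diff: "linear_ext (\<lambda>k. f k - g k) p = linear_ext f p - linear_ext g p"
  by (induction p rule: poly_mapping_induct)
     (simp_all add: linear_ext_add linear_ext_single right_diff_distrib)
lemma linear_ext_rmult: "linear_ext (\<lambda>k. f k * y) p = linear_ext f p * y"
  by (induction p rule: poly_mapping_induct)
     (simp_all add: linear_ext_add linear_ext_single distrib_right mult.assoc)
lemma linear_ext_lmult: "linear_ext (\<lambda>k. y * f k) p = y * linear_ext f p"
  by (induction p rule: poly_mapping_induct)
     (simp_all add: linear_ext_add linear_ext_single distrib_left cst_left_commute)
lemma linear_ext_basis_vec_id [simp]: "linear_ext basis_vec p = p"
  by (induction p rule: poly_mapping_induct)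
     (simp_all add: linear_ext_add single_as_cst linear_ext_cst)

definition is_linear ::
    "(('k::monoid_add \<Rightarrow>\<^sub>0 complex) \<Rightarrow> ('j::monoid_add \<Rightarrow>\<^sub>0 complex)) \<Rightarrow> bool" where
  "is_linear A \<longleftrightarrow> (\<forall>p. A p = linear_ext (\<lambda>k. A (basis_vec k)) p)"

lemma is_linearD: "is_linear A \<Longrightarrow> A p = linear_ext (\<lambda>k. A (basis_vec k)) p"
  unfolding is_linear_def by blast

lemma is_linear_linear_ext: "is_linear (linear_ext f)"
  by (simp add: is_linear_def)
lemma is_linear_id: "is_linear id"
  by (simp add: is_linear_def)
lemma is_linear_lmult: "is_linear (\<lambda>t. X * t)"
  by (simp add: is_linear_def linear_ext_lmult)
lemma is_linear_rmult: "is_linear (\<lambda>t. t * X)"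
  by (simp add: is_linear_def linear_ext_rmult)

lemma is_linear_apply_linear_ext:
  assumes "is_linear A" shows "A (linear_ext f p) = linear_ext (\<lambda>k. A (f k)) p"
proof -
  have "A (linear_ext f p) = linear_ext (\<lambda>k. A (basis_vec k)) (linear_ext f p)"
    by (rule is_linearD[OF assms])
  also have "\<dots> = linear_ext (\<lambda>u. linear_ext (\<lambda>k. A (basis_vec k)) (f u)) p"
    by (rule linear_ext_comp)
  also have "\<dots> = linear_ext (\<lambda>u. A (f u)) p"
    by (simp only: is_linearD[OF assms, symmetric])
  finally show ?thesis .
qed

lemma is_linear_comp:
  assumes "is_linear A" "is_linear B" shows "is_linear (\<lambda>x. B (A x))"
  unfolding is_linear_def
proof
  fix p
  have "B (A p) = B (linear_ext (\<lambda>k. A (basis_vec k)) p)"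
    by (subst is_linearD[OF assms(1)]) (rule refl)
  then show "B (A p) = linear_ext (\<lambda>k. B (A (basis_vec k))) p"
    by (simp only: is_linear_apply_linear_ext[OF assms(2)])
qed

lemma is_linear_add: "is_linear A \<Longrightarrow> A (p + r) = A p + A r"
  using is_linear_apply_linear_ext[of A basis_vec "p + r"]
  by (simp add: linear_ext_add is_linear_apply_linear_ext[of A basis_vec, symmetric])
lemma is_linear_uminus: "is_linear A \<Longrightarrow> A (- p) = - A p"
  using is_linear_apply_linear_ext[of A basis_vec "- p"]
  by (simp add: linear_ext_uminus is_linear_apply_linear_ext[of A basis_vec, symmetric])
lemma is_linear_diff: "is_linear A \<Longrightarrow> A (p - r) = A p - A r"
  using is_linear_apply_linear_ext[of A basis_vec "p - r"]
  by (simp add: linear_ext_diff is_linear_apply_linear_ext[of A basis_vec, symmetric])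
lemma is_linear_zero: "is_linear A \<Longrightarrow> A 0 = 0"
  using is_linear_diff[of A 0 0] by simp
lemma is_linear_cst: "is_linear A \<Longrightarrow> A (cst c * p) = cst c * A p"
  using is_linear_apply_linear_ext[of A basis_vec "cst c * p"]
  by (simp add: linear_ext_cst is_linear_apply_linear_ext[of A basis_vec, symmetric])

lemma is_linear_eqI:
  assumes "is_linear A" "is_linear B" "\<And>k. A (basis_vec k) = B (basis_vec k)"
  shows "A p = B p"
  using is_linearD[OF assms(1), of p] is_linearD[OF assms(2), of p] assms(3) by simp

lemma letters_plus [simp]: "letters (u + v) = letters u @ letters v"
  by (simp add: plus_word_def)
lemma letters_zero [simp]: "letters 0 = []"
  by (simp add: zero_word_def)

lemma basis_vec_Nil: "basis_vec (Wd []) = 1"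
  by (simp add: zero_word_def[symmetric] basis_vec_zero)
lemma basis_vec_Cons: "basis_vec (Wd (g # xs)) = gn g * basis_vec (Wd xs)"
  using basis_vec_add[of "Wd [g]" "Wd xs"] by (simp add: plus_word_def gn_def basis_vec_def)
lemma basis_vec_snoc: "basis_vec (Wd (xs @ [g])) = basis_vec (Wd xs) * gn g"
  using basis_vec_add[of "Wd xs" "Wd [g]"] by (simp add: plus_word_def gn_def basis_vec_def)

lemma hom_ext_eq: "hom_ext \<phi> = linear_ext (\<lambda>w. prod_list (map \<phi> (letters w)))"
  by (simp add: hom_ext_def lin_ext_def linear_ext_def fun_eq_iff)
lemma antihom_ext_eq: "antihom_ext \<phi> = linear_ext (\<lambda>w. prod_list (map \<phi> (rev (letters w))))"
  by (simp add: antihom_ext_def lin_ext_def linear_ext_def fun_eq_iff)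

lemma is_linear_hom_ext: "is_linear (hom_ext \<phi>)"
  by (simp add: hom_ext_eq is_linear_linear_ext)
lemma is_linear_antihom_ext: "is_linear (antihom_ext \<phi>)"
  by (simp add: antihom_ext_eq is_linear_linear_ext)

lemma hom_ext_mult: "hom_ext \<phi> (p * r) = hom_ext \<phi> p * hom_ext \<phi> r"
proof (induction p rule: poly_mapping_induct)
  case (single k c)
  show ?case
    by (induction r rule: poly_mapping_induct)
       (simp_all add: hom_ext_eq linear_ext_add linear_ext_single mult_single distrib_left
          cst_mult_cst)
qed (simp_all add: hom_ext_eq linear_ext_add distrib_right)

lemma antihom_ext_mult: "antihom_ext \<phi> (p * r) = antihom_ext \<phi> r * antihom_ext \<phi> p"
proof (induction p rule: poly_mapping_induct)
  case (single k c)
  show ?case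
    by (induction r rule: poly_mapping_induct)
       (simp_all add: antihom_ext_eq linear_ext_add linear_ext_single mult_single distrib_left
          distrib_right cst_mult_cst mult.commute)
qed (simp_all add: antihom_ext_eq linear_ext_add distrib_left distrib_right)

lemma hom_ext_one: "hom_ext \<phi> 1 = 1"
  by (simp add: hom_ext_eq basis_vec_zero[symmetric])
lemma antihom_ext_one: "antihom_ext \<phi> 1 = 1"
  by (simp add: antihom_ext_eq basis_vec_zero[symmetric])
lemma hom_ext_gn: "hom_ext \<phi> (gn g) = \<phi> g"
  by (simp add: gn_def hom_ext_eq linear_ext_single)
lemma antihom_ext_gn: "antihom_ext \<phi> (gn g) = \<phi> g"
  by (simp add: gn_def antihom_ext_eq linear_ext_single)

section \<open>Tensors and the map \<open>\<mu> \<circ> (A \<otimes> B)\<close>\<close>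

lemma tens_eq: "tens a b = linear_ext (\<lambda>u. linear_ext (\<lambda>v. basis_vec (u, v)) b) a"
  by (simp add: tens_def linear_ext_def sum_distrib_left single_as_cst cst_cst)

lemma tens_add_left: "tens (a + a') b = tens a b + tens a' b"
  by (simp add: tens_eq linear_ext_add)
lemma tens_add_right: "tens a (b + b') = tens a b + tens a b'"
  by (simp add: tens_eq linear_ext_add linear_ext_fun_add)
lemma tens_single:
  "tens (Poly_Mapping.single u x) (Poly_Mapping.single v y) = Poly_Mapping.single (u, v) (x * y)"
  by (simp add: tens_eq linear_ext_cst single_as_cst cst_cst)
lemma tens_one: "tens 1 1 = 1"
  by (metis single_one tens_single mult_1 zero_prod_def)

definition tmul :: "(fa \<Rightarrow> fa) \<Rightarrow> (fa \<Rightarrow> fa) \<Rightarrow> ta \<Rightarrow> fa" where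
  "tmul A B = linear_ext (\<lambda>k. A (basis_vec (fst k)) * B (basis_vec (snd k)))"

lemma is_linear_tmul: "is_linear (tmul A B)"
  by (simp add: tmul_def is_linear_linear_ext)

lemma tmul_basis_vec: "tmul A B (basis_vec (u, v)) = A (basis_vec u) * B (basis_vec v)"
  by (simp add: tmul_def)

lemma conv_eq_tmul: "conv D A B x = tmul A B (D x)"
proof -
  have mu_eq: "mu = linear_ext (\<lambda>k. basis_vec (fst k + snd k))"
    by (simp add: fun_eq_iff mu_def linear_ext_def single_as_cst)
  have mu_tens: "mu (tens a b) = a * b" for a b
  proof -
    have "mu (tens a b) = linear_ext (\<lambda>u. linear_ext (\<lambda>v. basis_vec u * basis_vec v) b) a"
      by (simp add: tens_eq mu_eq linear_ext_comp basis_vec_add)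
    then show ?thesis by (simp add: linear_ext_lmult linear_ext_rmult)
  qed
  have "tmap A B t = linear_ext (\<lambda>k. tens (A (basis_vec (fst k))) (B (basis_vec (snd k)))) t" for t
    by (simp add: tmap_def linear_ext_def basis_vec_def)
  moreover have "is_linear mu"
    by (simp add: mu_eq is_linear_linear_ext)
  ultimately show ?thesis
    by (simp add: conv_def is_linear_apply_linear_ext mu_tens tmul_def)
qed

lemma tmul_tens:
  assumes "is_linear A" "is_linear B"
  shows "tmul A B (tens a b) = A a * B b"
proof -
  have "tmul A B (tens a b) = linear_ext (\<lambda>u. A (basis_vec u) * B b) a"
    by (simp add: tens_eq is_linear_apply_linear_ext[OF is_linear_tmul] tmul_basis_vec
        linear_ext_lmult is_linearD[OF assms(2), symmetric])
  also have "\<dots> = A a * B b"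
    by (simp add: linear_ext_rmult is_linearD[OF assms(1), symmetric])
  finally show ?thesis .
qed

definition mult_on_words :: "(fa \<Rightarrow> fa) \<Rightarrow> bool" where
  "mult_on_words A \<longleftrightarrow> (\<forall>u v. A (basis_vec (u + v)) = A (basis_vec u) * A (basis_vec v))"
definition antimult_on_words :: "(fa \<Rightarrow> fa) \<Rightarrow> bool" where
  "antimult_on_words A \<longleftrightarrow> (\<forall>u v. A (basis_vec (u + v)) = A (basis_vec v) * A (basis_vec u))"

lemma mult_on_words_id: "mult_on_words id"
  by (simp add: mult_on_words_def basis_vec_add)
lemma mult_on_words_hom_ext: "mult_on_words (hom_ext \<phi>)"
  by (simp add: mult_on_words_def basis_vec_add hom_ext_mult)
lemma antimult_on_words_antihom_ext: "antimult_on_words (antihom_ext \<phi>)"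
  by (simp add: antimult_on_words_def basis_vec_add antihom_ext_mult)

text \<open>If \<open>A\<close> is multiplicative and \<open>B\<close> antimultiplicative, then \<open>\<mu> \<circ> (A \<otimes> B)\<close> turns
  left multiplication by \<open>u \<otimes> v\<close> into conjugation by \<open>A u\<close> and \<open>B v\<close>; symmetrically
  for right multiplication.  This is what makes convolutions computable word by word.\<close>
lemma tmul_basis_left:
  assumes "mult_on_words A" "antimult_on_words B"
  shows "tmul A B (basis_vec (u, v) * t) = A (basis_vec u) * tmul A B t * B (basis_vec v)"
proof (rule is_linear_eqI[of "\<lambda>t. tmul A B (basis_vec (u, v) * t)"])
  show "is_linear (\<lambda>t. tmul A B (basis_vec (u, v) * t))"
    by (rule is_linear_comp[OF is_linear_lmult is_linear_tmul])
  show "is_linear (\<lambda>t. A (basis_vec u) * tmul A B t * B (basis_vec v))"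
    by (rule is_linear_comp[OF is_linear_tmul is_linear_comp[OF is_linear_lmult is_linear_rmult]])
  fix k :: "word \<times> word"
  show "tmul A B (basis_vec (u, v) * basis_vec k) = A (basis_vec u) * tmul A B (basis_vec k) * B (basis_vec v)"
    using assms by (cases k) (simp add: basis_vec_add[symmetric] tmul_basis_vec
        mult_on_words_def antimult_on_words_def mult.assoc)
qed

lemma tmul_basis_right:
  assumes "antimult_on_words A" "mult_on_words B"
  shows "tmul A B (t * basis_vec (u, v)) = A (basis_vec u) * tmul A B t * B (basis_vec v)"
proof (rule is_linear_eqI[of "\<lambda>t. tmul A B (t * basis_vec (u, v))"])
  show "is_linear (\<lambda>t. tmul A B (t * basis_vec (u, v)))"
    by (rule is_linear_comp[OF is_linear_rmult is_linear_tmul])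
  show "is_linear (\<lambda>t. A (basis_vec u) * tmul A B t * B (basis_vec v))"
    by (rule is_linear_comp[OF is_linear_tmul is_linear_comp[OF is_linear_lmult is_linear_rmult]])
  fix k :: "word \<times> word"
  show "tmul A B (basis_vec k * basis_vec (u, v)) = A (basis_vec u) * tmul A B (basis_vec k) * B (basis_vec v)"
    using assms by (cases k) (simp add: basis_vec_add[symmetric] tmul_basis_vec
        mult_on_words_def antimult_on_words_def mult.assoc)
qed

section \<open>Congruence modulo the ideal generated by a set of relations\<close>

lemma ideal_gen_uminus: "a \<in> ideal_gen R \<Longrightarrow> - a \<in> ideal_gen R"
  using ideal_gen.lmul[of a R "-1"] by simp
lemma ideal_gen_diff: "a \<in> ideal_gen R \<Longrightarrow> b \<in> ideal_gen R \<Longrightarrow> a - b \<in> ideal_gen R"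
  using ideal_gen.add[of a R "- b"] ideal_gen_uminus[of b R] by simp
lemma ideal_gen_linear_ext: "(\<And>w. f w \<in> ideal_gen R) \<Longrightarrow> linear_ext f p \<in> ideal_gen R"
  by (induction p rule: poly_mapping_induct)
     (auto simp: linear_ext_add linear_ext_single intro: ideal_gen.intros)

text \<open>Equality in the quotient algebra \<open>fa / (R)\<close>.\<close>
definition cong_mod :: "fa set \<Rightarrow> fa \<Rightarrow> fa \<Rightarrow> bool" where
  "cong_mod R a b \<longleftrightarrow> a - b \<in> ideal_gen R"

locale ideal_cong =
  fixes R :: "fa set"
begin

abbreviation cong (infix "\<approx>" 50) where "a \<approx> b \<equiv> cong_mod R a b"

lemma cong_refl [simp]: "a \<approx> a"
  by (simp add: cong_mod_def ideal_gen.zero)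
lemma cong_sym: "a \<approx> b \<Longrightarrow> b \<approx> a"
  unfolding cong_mod_def using ideal_gen_uminus by fastforce
lemma cong_trans [trans]: "a \<approx> b \<Longrightarrow> b \<approx> c \<Longrightarrow> a \<approx> c"
  unfolding cong_mod_def using ideal_gen.add by fastforce
lemma cong_add: "a \<approx> a' \<Longrightarrow> b \<approx> b' \<Longrightarrow> a + b \<approx> a' + b'"
  unfolding cong_mod_def using ideal_gen.add by (fastforce simp: algebra_simps)
lemma cong_diff: "a \<approx> a' \<Longrightarrow> b \<approx> b' \<Longrightarrow> a - b \<approx> a' - b'"
  unfolding cong_mod_def using ideal_gen_diff by (fastforce simp: algebra_simps)
lemma cong_lmult: "a \<approx> a' \<Longrightarrow> x * a \<approx> x * a'"
  unfolding cong_mod_def using ideal_gen.lmul by (fastforce simp: algebra_simps)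
lemma cong_rmult: "a \<approx> a' \<Longrightarrow> a * x \<approx> a' * x"
  unfolding cong_mod_def using ideal_gen.rmul by (fastforce simp: algebra_simps)
lemma cong_mult: "a \<approx> a' \<Longrightarrow> b \<approx> b' \<Longrightarrow> a * b \<approx> a' * b'"
  by (meson cong_lmult cong_rmult cong_trans)
lemma cong_ctx: "a \<approx> a' \<Longrightarrow> x * a * y \<approx> x * a' * y"
  by (simp add: cong_lmult cong_rmult)
lemma cong_diff_zero: "a \<approx> b \<Longrightarrow> a - b \<approx> 0"
  by (simp add: cong_mod_def)
lemma cong_base: "r - s \<in> R \<Longrightarrow> r \<approx> s"
  by (simp add: cong_mod_def ideal_gen.base)

lemma cong_linear_ext: "(\<And>k. f k \<approx> g k) \<Longrightarrow> linear_ext f p \<approx> linear_ext g p"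
  unfolding cong_mod_def linear_ext_fun_diff[symmetric] by (rule ideal_gen_linear_ext)

lemma cong_linearI:
  assumes "is_linear A" "is_linear B" "\<And>k. A (basis_vec k) \<approx> B (basis_vec k)"
  shows "A t \<approx> B t"
  using cong_linear_ext[of "\<lambda>k. A (basis_vec k)" "\<lambda>k. B (basis_vec k)" t, OF assms(3)]
  by (simp only: is_linearD[OF assms(1), symmetric] is_linearD[OF assms(2), symmetric])

definition central :: "fa \<Rightarrow> bool" where
  "central z \<longleftrightarrow> (\<forall>y. z * y \<approx> y * z)"

lemma centralD: "central z \<Longrightarrow> z * y \<approx> y * z"
  by (simp add: central_def)

lemma central_mult: "central a \<Longrightarrow> central b \<Longrightarrow> central (a * b)"
  unfolding central_def by (metis cong_trans mult.assoc)
lemma central_one: "central 1"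
  by (simp add: central_def)
lemma central_zero: "central 0"
  by (simp add: central_def)
lemma central_cst: "central (cst c)"
  by (simp add: central_def cst_commute)

lemma central_gen:
  assumes gen: "\<And>g. z * gn g \<approx> gn g * z"
  shows "central z"
  unfolding central_def
proof
  fix y
  have word: "z * basis_vec (Wd xs) \<approx> basis_vec (Wd xs) * z" for xs
  proof (induction xs)
    case Nil then show ?case by (simp add: basis_vec_Nil)
  next
    case (Cons g xs)
    have "z * (gn g * basis_vec (Wd xs)) = (z * gn g) * basis_vec (Wd xs)"
      by (simp add: mult.assoc)
    also have "\<dots> \<approx> gn g * (z * basis_vec (Wd xs))"
      using cong_rmult[OF gen] by (simp add: mult.assoc)
    also have "\<dots> \<approx> gn g * (basis_vec (Wd xs) * z)"
      by (rule cong_lmult[OF Cons])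
    finally show ?case by (simp add: basis_vec_Cons mult.assoc)
  qed
  show "z * y \<approx> y * z"
    by (rule cong_linearI[OF is_linear_lmult is_linear_rmult]) (metis letters.cases word)
qed

end

context ideal_cong
begin

text \<open>This is the induction
  step for \<open>id \<star> S\<close> along a word read from the left.\<close>
lemma tmul_mult_central_right:
  assumes A: "mult_on_words A" "is_linear A" and B: "antimult_on_words B" "is_linear B"
    and t: "tmul A B t \<approx> Z" and Z: "central Z"
  shows "tmul A B (D * t) \<approx> tmul A B D * Z"
proof (rule cong_linearI[of "\<lambda>D. tmul A B (D * t)" "\<lambda>D. tmul A B D * Z"])
  show "is_linear (\<lambda>D. tmul A B (D * t))"
    by (rule is_linear_comp[OF is_linear_rmult is_linear_tmul])
  show "is_linear (\<lambda>D. tmul A B D * Z)"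
    by (rule is_linear_comp[OF is_linear_tmul is_linear_rmult])
  fix k :: "word \<times> word"
  obtain u v where k: "k = (u, v)" by (cases k)
  have "tmul A B (basis_vec (u, v) * t) = A (basis_vec u) * tmul A B t * B (basis_vec v)"
    by (rule tmul_basis_left[OF A(1) B(1)])
  also have "\<dots> \<approx> A (basis_vec u) * (Z * B (basis_vec v))"
    using cong_ctx[OF t] by (simp add: mult.assoc)
  also have "\<dots> \<approx> A (basis_vec u) * (B (basis_vec v) * Z)"
    by (rule cong_lmult[OF centralD[OF Z]])
  finally show "tmul A B (basis_vec k * t) \<approx> tmul A B (basis_vec k) * Z"
    by (simp add: k tmul_basis_vec mult.assoc)
qed

text \<open>The mirror statement for \<open>A\<close> antimultiplicative and \<open>B\<close> multiplicative (used for
  \<open>S \<star> id\<close>, along a word read from the right).\<close>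
lemma tmul_mult_central_left:
  assumes A: "antimult_on_words A" "is_linear A" and B: "mult_on_words B" "is_linear B"
    and t: "tmul A B t \<approx> Z" and Z: "central Z"
  shows "tmul A B (t * D) \<approx> Z * tmul A B D"
proof (rule cong_linearI[of "\<lambda>D. tmul A B (t * D)" "\<lambda>D. Z * tmul A B D"])
  show "is_linear (\<lambda>D. tmul A B (t * D))"
    by (rule is_linear_comp[OF is_linear_lmult is_linear_tmul])
  show "is_linear (\<lambda>D. Z * tmul A B D)"
    by (rule is_linear_comp[OF is_linear_tmul is_linear_lmult])
  fix k :: "word \<times> word"
  obtain u v where k: "k = (u, v)" by (cases k)
  have "tmul A B (t * basis_vec (u, v)) = A (basis_vec u) * tmul A B t * B (basis_vec v)"
    by (rule tmul_basis_right[OF A(1) B(1)])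
  also have "\<dots> \<approx> A (basis_vec u) * Z * B (basis_vec v)"
    by (rule cong_ctx[OF t])
  also have "\<dots> \<approx> Z * A (basis_vec u) * B (basis_vec v)"
    by (rule cong_rmult[OF cong_sym[OF centralD[OF Z]]])
  finally show "tmul A B (t * basis_vec k) \<approx> Z * tmul A B (basis_vec k)"
    by (simp add: k tmul_basis_vec mult.assoc)
qed

text \<open>If \<open>P\<close> is multiplicative with central values, then \<open>\<mu> \<circ> (P \<otimes> Q)\<close> is
  multiplicative when \<open>Q\<close> is, and antimultiplicative when \<open>Q\<close> is: the values of \<open>P\<close>
  can be moved freely past those of \<open>Q\<close>.\<close>
lemma tmul_mult_of_central:
  assumes P: "mult_on_words P" "is_linear P" "\<And>u. central (P (basis_vec u))"
    and Q: "mult_on_words Q" "is_linear Q"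
  shows "tmul P Q (s * t) \<approx> tmul P Q s * tmul P Q t"
proof -
  have basis: "tmul P Q (basis_vec m * basis_vec n) \<approx> tmul P Q (basis_vec m) * tmul P Q (basis_vec n)"
    for m n
  proof -
    obtain m1 m2 n1 n2 where mn: "m = (m1, m2)" "n = (n1, n2)" by (cases m, cases n)
    have "tmul P Q (basis_vec m * basis_vec n)
        = P (basis_vec m1) * (P (basis_vec n1) * Q (basis_vec m2)) * Q (basis_vec n2)"
      using P(1) Q(1) by (simp add: mn basis_vec_add[symmetric] tmul_basis_vec mult_on_words_def mult.assoc)
    also have "\<dots> \<approx> P (basis_vec m1) * (Q (basis_vec m2) * P (basis_vec n1)) * Q (basis_vec n2)"
      by (rule cong_ctx[OF centralD[OF P(3)]])
    finally show ?thesis by (simp add: mn tmul_basis_vec mult.assoc)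
  qed
  have left_basis: "tmul P Q (basis_vec m * t) \<approx> tmul P Q (basis_vec m) * tmul P Q t" for m
    by (rule cong_linearI[of "\<lambda>t. tmul P Q (basis_vec m * t)" "\<lambda>t. tmul P Q (basis_vec m) * tmul P Q t"])
       (simp_all add: basis is_linear_comp[OF is_linear_lmult is_linear_tmul]
         is_linear_comp[OF is_linear_tmul is_linear_lmult])
  show ?thesis
    by (rule cong_linearI[of "\<lambda>s. tmul P Q (s * t)" "\<lambda>s. tmul P Q s * tmul P Q t"])
       (simp_all add: left_basis is_linear_comp[OF is_linear_rmult is_linear_tmul]
         is_linear_comp[OF is_linear_tmul is_linear_rmult])
qed

lemma tmul_antimult_of_central:
  assumes P: "mult_on_words P" "is_linear P" "\<And>u. central (P (basis_vec u))"
    and Q: "antimult_on_words Q" "is_linear Q"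
  shows "tmul P Q (s * t) \<approx> tmul P Q t * tmul P Q s"
proof -
  have basis: "tmul P Q (basis_vec m * basis_vec n) \<approx> tmul P Q (basis_vec n) * tmul P Q (basis_vec m)"
    for m n
  proof -
    obtain m1 m2 n1 n2 where mn: "m = (m1, m2)" "n = (n1, n2)" by (cases m, cases n)
    have "tmul P Q (basis_vec m * basis_vec n)
        = P (basis_vec m1) * (P (basis_vec n1) * Q (basis_vec n2)) * Q (basis_vec m2)"
      using P(1) Q(1)
      by (simp add: mn basis_vec_add[symmetric] tmul_basis_vec mult_on_words_def
          antimult_on_words_def mult.assoc)
    also have "\<dots> \<approx> (P (basis_vec n1) * Q (basis_vec n2)) * P (basis_vec m1) * Q (basis_vec m2)"
      by (rule cong_rmult[OF centralD[OF P(3)]])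
    finally show ?thesis by (simp add: mn tmul_basis_vec mult.assoc)
  qed
  have left_basis: "tmul P Q (basis_vec m * t) \<approx> tmul P Q t * tmul P Q (basis_vec m)" for m
    by (rule cong_linearI[of "\<lambda>t. tmul P Q (basis_vec m * t)" "\<lambda>t. tmul P Q t * tmul P Q (basis_vec m)"])
       (simp_all add: basis is_linear_comp[OF is_linear_lmult is_linear_tmul]
         is_linear_comp[OF is_linear_tmul is_linear_rmult])
  show ?thesis
    by (rule cong_linearI[of "\<lambda>s. tmul P Q (s * t)" "\<lambda>s. tmul P Q t * tmul P Q s"])
       (simp_all add: left_basis is_linear_comp[OF is_linear_rmult is_linear_tmul]
         is_linear_comp[OF is_linear_tmul is_linear_lmult])
qed

end

lemma is_linear_antipode: "is_linear antipode"
  by (simp add: antipode_def is_linear_antihom_ext)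
lemma antimult_on_words_antipode: "antimult_on_words antipode"
  by (simp add: antipode_def antimult_on_words_antihom_ext)
lemma antipode_mult: "antipode (a * b) = antipode b * antipode a"
  by (simp add: antipode_def antihom_ext_mult)
lemma antipode_gn [simp]: "antipode (gn g) = S_gen g"
  by (simp add: antipode_def antihom_ext_gn)
lemma antipode_one [simp]: "antipode 1 = 1"
  by (simp add: antipode_def antihom_ext_one)
lemma antipode_cst_mult: "antipode (cst c * x) = cst c * antipode x"
  by (rule is_linear_cst[OF is_linear_antipode])
lemma antipode_scaled_product: "antipode (cst c * a * b) = cst c * (antipode b * antipode a)"
proof -
  have "antipode (cst c * a * b) = cst c * antipode (a * b)"
    by (simp only: mult.assoc antipode_cst_mult)
  then show ?thesis by (simp only: antipode_mult)
qed
lemma antipode_K [simp]: "antipode K = Kb" by simp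
lemma antipode_Kb [simp]: "antipode Kb = K" by simp
lemma antipode_L [simp]: "antipode L = Lb" by simp
lemma antipode_Lb [simp]: "antipode Lb = L" by simp
lemmas antipode_simps = antipode_mult is_linear_add[OF is_linear_antipode]
  is_linear_diff[OF is_linear_antipode] is_linear_uminus[OF is_linear_antipode]

lemma is_linear_Delta_norm: "is_linear Delta_norm"
  by (simp add: Delta_norm_def is_linear_hom_ext)
lemma Delta_norm_mult: "Delta_norm (a * b) = Delta_norm a * Delta_norm b"
  by (simp add: Delta_norm_def hom_ext_mult)
lemma Delta_norm_gn: "Delta_norm (gn g) = delta_norm_gen g"
  by (simp add: Delta_norm_def hom_ext_gn)
lemma Delta_norm_one: "Delta_norm 1 = tens 1 1"
  by (simp add: Delta_norm_def hom_ext_one tens_one)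

lemma is_linear_Delta_twist: "is_linear Delta_twist"
  by (simp add: Delta_twist_def is_linear_hom_ext)
lemma Delta_twist_mult: "Delta_twist (a * b) = Delta_twist a * Delta_twist b"
  by (simp add: Delta_twist_def hom_ext_mult)
lemma Delta_twist_gn: "Delta_twist (gn g) = delta_twist_gen g"
  by (simp add: Delta_twist_def hom_ext_gn)
lemma Delta_twist_one: "Delta_twist 1 = tens 1 1"
  by (simp add: Delta_twist_def hom_ext_one tens_one)

lemma eta_eps_eq: "eta (eps x) = linear_ext (\<lambda>w. cst (prod_list (map eps_gen (letters w)))) x"
  by (simp add: eta_def eps_def counit_ext_def linear_ext_def cst_sum cst_mult)
lemma is_linear_eta_eps: "is_linear (\<lambda>x. eta (eps x))"
  by (simp add: eta_eps_eq is_linear_linear_ext)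
lemma eta_eps_word: "eta (eps (basis_vec (Wd xs))) = cst (prod_list (map eps_gen xs))"
  by (simp add: eta_eps_eq)

lemma is_linear_conv: "is_linear D \<Longrightarrow> is_linear (conv D A B)"
  unfolding conv_eq_tmul[abs_def] by (rule is_linear_comp[OF _ is_linear_tmul])

lemmas tmul_eval = tens_add_left tens_add_right is_linear_add[OF is_linear_tmul]
  tmul_tens[OF is_linear_antipode is_linear_id] tmul_tens[OF is_linear_id is_linear_antipode]
  antipode_simps

section \<open>Consequences of the relations common to both algebras\<close>

text \<open>\<open>K Kb\<close> and \<open>L Lb\<close> are complementary idempotents; \<open>K, Kb\<close> live in the first corner
  and \<open>L, Lb\<close> in the second, so all mixed products vanish and \<open>Kb + Lb\<close> is a two-sided
  inverse of \<open>K + L\<close>.\<close>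
definition projK :: fa where "projK = K * Kb"
definition projL :: fa where "projL = L * Lb"

locale kl_relations = ideal_cong +
  fixes q :: complex
  assumes q_nonzero: "q \<noteq> 0" and common_rels_in: "common_rels q \<subseteq> R"
begin

lemma common_rel: "x - y \<in> common_rels q \<Longrightarrow> x \<approx> y"
  using common_rels_in by (auto intro: cong_base)

lemma K_Kb_K: "K * Kb * K \<approx> K" by (rule common_rel) (simp add: common_rels_def)
lemma Kb_K_Kb: "Kb * K * Kb \<approx> Kb" by (rule common_rel) (simp add: common_rels_def)
lemma K_Kb_comm: "K * Kb \<approx> Kb * K" by (rule common_rel) (simp add: common_rels_def)
lemma L_Lb_L: "L * Lb * L \<approx> L" by (rule common_rel) (simp add: common_rels_def)
lemma Lb_L_Lb: "Lb * L * Lb \<approx> Lb" by (rule common_rel) (simp add: common_rels_def)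
lemma L_Lb_comm: "L * Lb \<approx> Lb * L" by (rule common_rel) (simp add: common_rels_def)
lemma projK_projL_sum: "projK + projL \<approx> 1"
  unfolding projK_def projL_def by (rule common_rel) (simp add: common_rels_def)
lemma E_F_comm: "E * F - F * E \<approx> cst (1 / (q - inverse q)) * ((K + L) - (Kb + Lb))"
  by (rule common_rel) (simp add: common_rels_def)

lemma Kb_K: "Kb * K \<approx> projK" unfolding projK_def by (rule cong_sym[OF K_Kb_comm])
lemma Lb_L: "Lb * L \<approx> projL" unfolding projL_def by (rule cong_sym[OF L_Lb_comm])

lemma projK_K: "projK * K \<approx> K" unfolding projK_def by (rule K_Kb_K)
lemma projL_L: "projL * L \<approx> L" unfolding projL_def by (rule L_Lb_L)
lemma Kb_projK: "Kb * projK \<approx> Kb" unfolding projK_def using Kb_K_Kb by (simp add: mult.assoc)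
lemma Lb_projL: "Lb * projL \<approx> Lb" unfolding projL_def using Lb_L_Lb by (simp add: mult.assoc)
lemma K_projK: "K * projK \<approx> K"
proof -
  have "K * projK \<approx> K * (Kb * K)" unfolding projK_def by (rule cong_lmult[OF K_Kb_comm])
  also have "\<dots> = K * Kb * K" by (simp add: mult.assoc)
  also have "\<dots> \<approx> K" by (rule K_Kb_K)
  finally show ?thesis .
qed
lemma L_projL: "L * projL \<approx> L"
proof -
  have "L * projL \<approx> L * (Lb * L)" unfolding projL_def by (rule cong_lmult[OF L_Lb_comm])
  also have "\<dots> = L * Lb * L" by (simp add: mult.assoc)
  also have "\<dots> \<approx> L" by (rule L_Lb_L)
  finally show ?thesis .
qed
lemma projK_Kb: "projK * Kb \<approx> Kb"
  using cong_trans[OF cong_rmult[OF K_Kb_comm] Kb_K_Kb] by (simp add: projK_def)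
lemma projL_Lb: "projL * Lb \<approx> Lb"
  using cong_trans[OF cong_rmult[OF L_Lb_comm] Lb_L_Lb] by (simp add: projL_def)

lemma projK_idem: "projK * projK \<approx> projK"
  using cong_rmult[OF projK_K, of Kb] by (simp add: projK_def mult.assoc)
lemma projL_idem: "projL * projL \<approx> projL"
  using cong_rmult[OF projL_L, of Lb] by (simp add: projL_def mult.assoc)

lemma projK_projL: "projK * projL \<approx> 0"
proof -
  have "projK * projL \<approx> projK * (1 - projK)"
    by (rule cong_lmult) (use cong_diff[OF projK_projL_sum cong_refl, of projK] in simp)
  also have "\<dots> = projK - projK * projK" by (simp add: algebra_simps)
  also have "\<dots> \<approx> projK - projK" by (rule cong_diff[OF cong_refl projK_idem])
  finally show ?thesis by simp
qed
lemma projL_projK: "projL * projK \<approx> 0"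
proof -
  have "projL * projK \<approx> projL * (1 - projL)"
    by (rule cong_lmult) (use cong_diff[OF projK_projL_sum cong_refl, of projL] in simp)
  also have "\<dots> = projL - projL * projL" by (simp add: algebra_simps)
  also have "\<dots> \<approx> projL - projL" by (rule cong_diff[OF cong_refl projL_idem])
  finally show ?thesis by simp
qed

lemma corner_KL:
  assumes "X * projK \<approx> X" "projL * Y \<approx> Y" shows "X * Y \<approx> 0"
proof -
  have "X * Y \<approx> (X * projK) * (projL * Y)"
    by (rule cong_sym[OF cong_mult[OF assms]])
  also have "\<dots> = X * (projK * projL) * Y" by (simp add: mult.assoc)
  also have "\<dots> \<approx> X * 0 * Y" by (rule cong_ctx[OF projK_projL])
  finally show ?thesis by simp
qed
lemma corner_LK:
  assumes "X * projL \<approx> X" "projK * Y \<approx> Y" shows "X * Y \<approx> 0"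
proof -
  have "X * Y \<approx> (X * projL) * (projK * Y)"
    by (rule cong_sym[OF cong_mult[OF assms]])
  also have "\<dots> = X * (projL * projK) * Y" by (simp add: mult.assoc)
  also have "\<dots> \<approx> X * 0 * Y" by (rule cong_ctx[OF projL_projK])
  finally show ?thesis by simp
qed

lemma K_L: "K * L \<approx> 0" by (rule corner_KL[OF K_projK projL_L])
lemma K_Lb: "K * Lb \<approx> 0" by (rule corner_KL[OF K_projK projL_Lb])
lemma Kb_L: "Kb * L \<approx> 0" by (rule corner_KL[OF Kb_projK projL_L])
lemma Kb_Lb: "Kb * Lb \<approx> 0" by (rule corner_KL[OF Kb_projK projL_Lb])
lemma L_K: "L * K \<approx> 0" by (rule corner_LK[OF L_projL projK_K])
lemma L_Kb: "L * Kb \<approx> 0" by (rule corner_LK[OF L_projL projK_Kb])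
lemma Lb_K: "Lb * K \<approx> 0" by (rule corner_LK[OF Lb_projL projK_K])
lemma Lb_Kb: "Lb * Kb \<approx> 0" by (rule corner_LK[OF Lb_projL projK_Kb])
lemma projK_L: "projK * L \<approx> 0" by (rule corner_KL[OF projK_idem projL_L])
lemma projK_Lb: "projK * Lb \<approx> 0" by (rule corner_KL[OF projK_idem projL_Lb])
lemma projL_K: "projL * K \<approx> 0" by (rule corner_LK[OF projL_idem projK_K])
lemma projL_Kb: "projL * Kb \<approx> 0" by (rule corner_LK[OF projL_idem projK_Kb])
lemma L_projK: "L * projK \<approx> 0" by (rule corner_LK[OF L_projL projK_idem])
lemma Lb_projK: "Lb * projK \<approx> 0" by (rule corner_LK[OF Lb_projL projK_idem])
lemma K_projL: "K * projL \<approx> 0" by (rule corner_KL[OF K_projK projL_idem])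
lemma Kb_projL: "Kb * projL \<approx> 0" by (rule corner_KL[OF Kb_projK projL_idem])

lemma inverse_left: "(Kb + Lb) * (K + L) \<approx> 1"
proof -
  have "(Kb + Lb) * (K + L) = Kb * K + Kb * L + Lb * K + Lb * L" by (simp add: algebra_simps)
  also have "\<dots> \<approx> projK + 0 + 0 + projL" by (intro cong_add Kb_K Kb_L Lb_K Lb_L)
  also have "\<dots> \<approx> 1" using projK_projL_sum by simp
  finally show ?thesis .
qed
lemma inverse_right: "(K + L) * (Kb + Lb) \<approx> 1"
proof -
  have "(K + L) * (Kb + Lb) = projK + K * Lb + L * Kb + projL"
    by (simp add: algebra_simps projK_def projL_def)
  also have "\<dots> \<approx> projK + 0 + 0 + projL" by (intro cong_add cong_refl K_Lb L_Kb)
  also have "\<dots> \<approx> 1" using projK_projL_sum by simp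
  finally show ?thesis .
qed

lemma commute_sum: "X * Y \<approx> Y * X \<Longrightarrow> X * Z \<approx> Z * X \<Longrightarrow> X * (Y + Z) \<approx> (Y + Z) * X"
  by (simp add: distrib_left distrib_right cong_add)
lemma commute_zero: "X * Y \<approx> 0 \<Longrightarrow> Y * X \<approx> 0 \<Longrightarrow> X * Y \<approx> Y * X"
  by (meson cong_sym cong_trans)

lemma K_commute_inv: "K * (Kb + Lb) \<approx> (Kb + Lb) * K"
  by (rule commute_sum[OF K_Kb_comm commute_zero[OF K_Lb Lb_K]])
lemma Kb_commute_inv: "Kb * (Kb + Lb) \<approx> (Kb + Lb) * Kb"
  by (rule commute_sum[OF cong_refl commute_zero[OF Kb_Lb Lb_Kb]])
lemma L_commute_inv: "L * (Kb + Lb) \<approx> (Kb + Lb) * L"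
  by (rule commute_sum[OF commute_zero[OF L_Kb Kb_L] L_Lb_comm])
lemma Lb_commute_inv: "Lb * (Kb + Lb) \<approx> (Kb + Lb) * Lb"
  by (rule commute_sum[OF commute_zero[OF Lb_Kb Kb_Lb] cong_refl])
lemma K_commute_sum: "K * (K + L) \<approx> (K + L) * K"
  by (rule commute_sum[OF cong_refl commute_zero[OF K_L L_K]])
lemma Kb_commute_sum: "Kb * (K + L) \<approx> (K + L) * Kb"
  by (rule commute_sum[OF cong_sym[OF K_Kb_comm] commute_zero[OF Kb_L L_Kb]])
lemma L_commute_sum: "L * (K + L) \<approx> (K + L) * L"
  by (rule commute_sum[OF commute_zero[OF L_K K_L] cong_refl])
lemma Lb_commute_sum: "Lb * (K + L) \<approx> (K + L) * Lb"
  by (rule commute_sum[OF commute_zero[OF Lb_K K_Lb] cong_sym[OF L_Lb_comm]])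

end

section \<open>The antipode preserves the defining ideals\<close>

context ideal_cong
begin

lemma antipode_ideal_gen:
  assumes rels: "\<And>r. r \<in> R \<Longrightarrow> antipode r \<approx> 0" and a: "a \<in> ideal_gen R"
  shows "antipode a \<in> ideal_gen R"
  using a
proof (induction rule: ideal_gen.induct)
  case (base r) then show ?case using rels by (simp add: cong_mod_def)
next
  case zero then show ?case by (simp add: is_linear_zero[OF is_linear_antipode] ideal_gen.zero)
next
  case (add a b) then show ?case by (simp add: antipode_simps ideal_gen.add)
next
  case (lmul a x) then show ?case by (simp add: antipode_mult ideal_gen.rmul)
next
  case (rmul a x) then show ?case by (simp add: antipode_mult ideal_gen.lmul)
qed

end

context kl_relations
begin

lemma commute_through:
  assumes x: "X * G \<approx> cst a * (G * X')" and y: "X' * H \<approx> cst b * (H * X'')" and ab: "a * b = 1"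
  shows "X * (G * H) \<approx> (G * H) * X''"
proof -
  have "X * (G * H) = (X * G) * H" by (simp add: mult.assoc)
  also have "\<dots> \<approx> cst a * (G * (X' * H))" using cong_rmult[OF x] by (simp add: mult.assoc)
  also have "\<dots> \<approx> cst a * (G * (cst b * (H * X'')))" by (rule cong_lmult[OF cong_lmult[OF y]])
  also have "\<dots> = cst (a * b) * (G * (H * X''))" by (simp only: cst_left_commute[of G b] cst_cst)
  finally show ?thesis by (simp add: ab mult.assoc)
qed

lemma antipode_E_relation:
  assumes S: "antipode X = Y" "antipode X' = Y'"
    and rel: "Y' * E \<approx> cst d * (E * Y)" and cd: "c * d = 1"
    and comm: "Y * (Kb + Lb) \<approx> (Kb + Lb) * Y"
  shows "antipode (X * E - cst c * E * X') \<approx> 0"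
proof -
  let ?W = "Kb + Lb"
  have eval: "antipode (X * E - cst c * E * X') = cst c * (Y' * (E * ?W)) - E * ?W * Y"
    by (simp only: is_linear_diff[OF is_linear_antipode] antipode_scaled_product)
       (simp add: antipode_mult S algebra_simps)
  have "cst c * (Y' * (E * ?W)) = cst c * ((Y' * E) * ?W)" by (simp add: mult.assoc)
  also have "\<dots> \<approx> cst c * ((cst d * (E * Y)) * ?W)" by (rule cong_lmult[OF cong_rmult[OF rel]])
  also have "\<dots> = cst (c * d) * (E * (Y * ?W))" by (simp add: mult.assoc cst_cst)
  also have "\<dots> \<approx> cst (c * d) * (E * (?W * Y))" by (rule cong_lmult[OF cong_lmult[OF comm]])
  finally have "cst c * (Y' * (E * ?W)) \<approx> E * ?W * Y" by (simp add: cd mult.assoc)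
  then show ?thesis unfolding eval by (rule cong_diff_zero)
qed

lemma antipode_F_relation:
  assumes S: "antipode X = Y" "antipode X' = Y'"
    and rel: "Y' * F \<approx> cst d * (F * Y)" and cd: "c * d = 1"
    and comm: "Y' * (K + L) \<approx> (K + L) * Y'"
  shows "antipode (X * F - cst c * F * X') \<approx> 0"
proof -
  let ?V = "K + L"
  have eval: "antipode (X * F - cst c * F * X') = cst c * (Y' * (?V * F)) - ?V * F * Y"
    by (simp only: is_linear_diff[OF is_linear_antipode] antipode_scaled_product)
       (simp add: antipode_mult S algebra_simps)
  have "cst c * (Y' * (?V * F)) = cst c * ((Y' * ?V) * F)" by (simp add: mult.assoc)
  also have "\<dots> \<approx> cst c * (?V * (Y' * F))"
    using cong_lmult[OF cong_rmult[OF comm]] by (simp add: mult.assoc)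
  also have "\<dots> \<approx> cst c * (?V * (cst d * (F * Y)))" by (rule cong_lmult[OF cong_lmult[OF rel]])
  also have "\<dots> = cst (c * d) * (?V * (F * Y))" by (simp only: cst_left_commute[of ?V d] cst_cst)
  finally have "cst c * (Y' * (?V * F)) \<approx> ?V * F * Y" by (simp add: cd mult.assoc)
  then show ?thesis unfolding eval by (rule cong_diff_zero)
qed

lemma antipode_commutator_relation:
  assumes FE: "(K + L) * (F * E) \<approx> (F * E) * (K + L)"
  shows "antipode (E * F - F * E - cst (1 / (q - inverse q)) * ((K + L) - (Kb + Lb))) \<approx> 0"
proof -
  let ?V = "K + L" and ?W = "Kb + Lb" and ?c = "cst (1 / (q - inverse q))"
  have eval: "antipode (E * F - F * E - ?c * (?V - ?W))
      = (- (?V * F)) * (- (E * ?W)) - (- (E * ?W)) * (- (?V * F)) - ?c * (?W - ?V)"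
    by (simp only: is_linear_diff[OF is_linear_antipode] antipode_cst_mult,
        simp only: antipode_mult is_linear_add[OF is_linear_antipode] antipode_gn S_gen.simps)
  have "(- (?V * F)) * (- (E * ?W)) = ?V * (F * E) * ?W" by (simp add: mult.assoc)
  also have "\<dots> \<approx> F * E * (?V * ?W)" using cong_rmult[OF FE] by (simp add: mult.assoc)
  also have "\<dots> \<approx> F * E * 1" by (rule cong_lmult[OF inverse_right])
  finally have FE_part: "(- (?V * F)) * (- (E * ?W)) \<approx> F * E" by simp
  have "(- (E * ?W)) * (- (?V * F)) = E * (?W * ?V) * F" by (simp add: mult.assoc)
  also have "\<dots> \<approx> E * 1 * F" by (rule cong_ctx[OF inverse_left])
  finally have EF_part: "(- (E * ?W)) * (- (?V * F)) \<approx> E * F" by simp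
  have commutator: "F * E - E * F \<approx> ?c * (?W - ?V)"
    using cong_diff[OF cong_refl E_F_comm, of 0] by (simp add: algebra_simps)
  have "antipode (E * F - F * E - ?c * (?V - ?W)) \<approx> (F * E - E * F) - ?c * (?W - ?V)"
    unfolding eval by (intro cong_diff FE_part EF_part cong_refl)
  also have "\<dots> \<approx> ?c * (?W - ?V) - ?c * (?W - ?V)"
    by (intro cong_diff commutator cong_refl)
  finally show ?thesis by simp
qed

text \<open>The antipode maps every common relation to something congruent to zero: the first
  seven relations are permuted among themselves, the commutator relation is handled above.\<close>
lemma antipode_common_rels:
  assumes FE: "(K + L) * (F * E) \<approx> (F * E) * (K + L)" and r: "r \<in> common_rels q"
  shows "antipode r \<approx> 0"
proof -
  have "antipode r \<in> common_rels q
      \<or> r = E * F - F * E - cst (1 / (q - inverse q)) * ((K + L) - (Kb + Lb))"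
    using r unfolding common_rels_def by (auto simp: antipode_simps mult.assoc)
  then show ?thesis
    using common_rel[of "antipode r" 0] antipode_commutator_relation[OF FE] by auto
qed

end

context kl_relations
begin

lemma q_sq_inverse_left: "inverse (q^2) * q^2 = 1" using q_nonzero by simp
lemma q_sq_inverse_right: "q^2 * inverse (q^2) = 1" using q_nonzero by simp

end

locale kl_norm = kl_relations +
  assumes norm_rels_in: "norm_rels q \<subseteq> R"
begin

lemma norm_rel: "x - cst c * y * z \<in> norm_rels q \<Longrightarrow> x \<approx> cst c * (y * z)"
  using norm_rels_in by (auto intro: cong_base simp: mult.assoc)

lemma K_E: "K * E \<approx> cst (q^2) * (E * K)" by (rule norm_rel) (simp add: norm_rels_def)
lemma L_E: "L * E \<approx> cst (q^2) * (E * L)" by (rule norm_rel) (simp add: norm_rels_def)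
lemma Kb_E: "Kb * E \<approx> cst (inverse (q^2)) * (E * Kb)" by (rule norm_rel) (simp add: norm_rels_def)
lemma Lb_E: "Lb * E \<approx> cst (inverse (q^2)) * (E * Lb)" by (rule norm_rel) (simp add: norm_rels_def)
lemma K_F: "K * F \<approx> cst (inverse (q^2)) * (F * K)" by (rule norm_rel) (simp add: norm_rels_def)
lemma L_F: "L * F \<approx> cst (inverse (q^2)) * (F * L)" by (rule norm_rel) (simp add: norm_rels_def)
lemma Kb_F: "Kb * F \<approx> cst (q^2) * (F * Kb)" by (rule norm_rel) (simp add: norm_rels_def)
lemma Lb_F: "Lb * F \<approx> cst (q^2) * (F * Lb)" by (rule norm_rel) (simp add: norm_rels_def)

lemma sum_commute_FE: "(K + L) * (F * E) \<approx> (F * E) * (K + L)"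
  using cong_add[OF commute_through[OF K_F K_E q_sq_inverse_left]
                    commute_through[OF L_F L_E q_sq_inverse_left]]
  by (simp add: algebra_simps)

lemma antipode_norm_rels: "r \<in> norm_rels q \<Longrightarrow> antipode r \<approx> 0"
proof -
  have "antipode (K * E - cst (q^2) * E * K) \<approx> 0"
    by (rule antipode_E_relation[OF antipode_K antipode_K Kb_E q_sq_inverse_right Kb_commute_inv])
  moreover have "antipode (L * E - cst (q^2) * E * L) \<approx> 0"
    by (rule antipode_E_relation[OF antipode_L antipode_L Lb_E q_sq_inverse_right Lb_commute_inv])
  moreover have "antipode (Kb * E - cst (inverse (q^2)) * E * Kb) \<approx> 0"
    by (rule antipode_E_relation[OF antipode_Kb antipode_Kb K_E q_sq_inverse_left K_commute_inv])
  moreover have "antipode (Lb * E - cst (inverse (q^2)) * E * Lb) \<approx> 0"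
    by (rule antipode_E_relation[OF antipode_Lb antipode_Lb L_E q_sq_inverse_left L_commute_inv])
  moreover have "antipode (K * F - cst (inverse (q^2)) * F * K) \<approx> 0"
    by (rule antipode_F_relation[OF antipode_K antipode_K Kb_F q_sq_inverse_left Kb_commute_sum])
  moreover have "antipode (L * F - cst (inverse (q^2)) * F * L) \<approx> 0"
    by (rule antipode_F_relation[OF antipode_L antipode_L Lb_F q_sq_inverse_left Lb_commute_sum])
  moreover have "antipode (Kb * F - cst (q^2) * F * Kb) \<approx> 0"
    by (rule antipode_F_relation[OF antipode_Kb antipode_Kb K_F q_sq_inverse_right K_commute_sum])
  moreover have "antipode (Lb * F - cst (q^2) * F * Lb) \<approx> 0"
    by (rule antipode_F_relation[OF antipode_Lb antipode_Lb L_F q_sq_inverse_right L_commute_sum])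
  ultimately show "r \<in> norm_rels q \<Longrightarrow> antipode r \<approx> 0"
    unfolding norm_rels_def using antipode_common_rels[OF sum_commute_FE] by blast
qed

end

locale kl_twist = kl_relations +
  assumes twist_rels_in: "twist_rels q \<subseteq> R"
begin

lemma twist_rel: "x - cst c * y * z \<in> twist_rels q \<Longrightarrow> x \<approx> cst c * (y * z)"
  using twist_rels_in by (auto intro: cong_base simp: mult.assoc)

lemma K_E: "K * E \<approx> cst (q^2) * (E * L)" by (rule twist_rel) (simp add: twist_rels_def)
lemma L_E: "L * E \<approx> cst (q^2) * (E * K)" by (rule twist_rel) (simp add: twist_rels_def)
lemma Kb_E: "Kb * E \<approx> cst (inverse (q^2)) * (E * Lb)" by (rule twist_rel) (simp add: twist_rels_def)
lemma Lb_E: "Lb * E \<approx> cst (inverse (q^2)) * (E * Kb)" by (rule twist_rel) (simp add: twist_rels_def)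
lemma K_F: "K * F \<approx> cst (inverse (q^2)) * (F * L)" by (rule twist_rel) (simp add: twist_rels_def)
lemma L_F: "L * F \<approx> cst (inverse (q^2)) * (F * K)" by (rule twist_rel) (simp add: twist_rels_def)
lemma Kb_F: "Kb * F \<approx> cst (q^2) * (F * Lb)" by (rule twist_rel) (simp add: twist_rels_def)
lemma Lb_F: "Lb * F \<approx> cst (q^2) * (F * Kb)" by (rule twist_rel) (simp add: twist_rels_def)

lemma sum_commute_FE: "(K + L) * (F * E) \<approx> (F * E) * (K + L)"
  using cong_add[OF commute_through[OF K_F L_E q_sq_inverse_left]
                    commute_through[OF L_F K_E q_sq_inverse_left]]
  by (simp add: algebra_simps)

lemma antipode_twist_rels: "r \<in> twist_rels q \<Longrightarrow> antipode r \<approx> 0"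
proof -
  have "antipode (K * E - cst (q^2) * E * L) \<approx> 0"
    by (rule antipode_E_relation[OF antipode_K antipode_L Lb_E q_sq_inverse_right Kb_commute_inv])
  moreover have "antipode (L * E - cst (q^2) * E * K) \<approx> 0"
    by (rule antipode_E_relation[OF antipode_L antipode_K Kb_E q_sq_inverse_right Lb_commute_inv])
  moreover have "antipode (Kb * E - cst (inverse (q^2)) * E * Lb) \<approx> 0"
    by (rule antipode_E_relation[OF antipode_Kb antipode_Lb L_E q_sq_inverse_left K_commute_inv])
  moreover have "antipode (Lb * E - cst (inverse (q^2)) * E * Kb) \<approx> 0"
    by (rule antipode_E_relation[OF antipode_Lb antipode_Kb K_E q_sq_inverse_left L_commute_inv])
  moreover have "antipode (K * F - cst (inverse (q^2)) * F * L) \<approx> 0"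
    by (rule antipode_F_relation[OF antipode_K antipode_L Lb_F q_sq_inverse_left Lb_commute_sum])
  moreover have "antipode (L * F - cst (inverse (q^2)) * F * K) \<approx> 0"
    by (rule antipode_F_relation[OF antipode_L antipode_K Kb_F q_sq_inverse_left Kb_commute_sum])
  moreover have "antipode (Kb * F - cst (q^2) * F * Lb) \<approx> 0"
    by (rule antipode_F_relation[OF antipode_Kb antipode_Lb L_F q_sq_inverse_right L_commute_sum])
  moreover have "antipode (Lb * F - cst (q^2) * F * Kb) \<approx> 0"
    by (rule antipode_F_relation[OF antipode_Lb antipode_Kb K_F q_sq_inverse_right K_commute_sum])
  ultimately show "r \<in> twist_rels q \<Longrightarrow> antipode r \<approx> 0"
    unfolding twist_rels_def using antipode_common_rels[OF sum_commute_FE] by blast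
qed

end

section \<open>\<open>U_{K,L,twist}\<close> is a Hopf algebra\<close>

context kl_relations
begin

lemma antipode_id_twist_gen: "tmul antipode id (delta_twist_gen g) \<approx> cst (eps_gen g)"
proof (cases g)
  case GK
  have "tmul antipode id (delta_twist_gen g) = Kb * K + Lb * L" by (simp add: GK tmul_eval)
  also have "\<dots> \<approx> projK + projL" by (intro cong_add Kb_K Lb_L)
  also have "\<dots> \<approx> 1" by (rule projK_projL_sum)
  finally show ?thesis by (simp add: GK)
next
  case GKb
  have "tmul antipode id (delta_twist_gen g) = projK + projL"
    by (simp add: GKb tmul_eval projK_def projL_def)
  also have "\<dots> \<approx> 1" by (rule projK_projL_sum)
  finally show ?thesis by (simp add: GKb)
next
  case GL
  have "tmul antipode id (delta_twist_gen g) = Lb * K + Kb * L" by (simp add: GL tmul_eval)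
  also have "\<dots> \<approx> 0 + 0" by (intro cong_add Lb_K Kb_L)
  finally show ?thesis by (simp add: GL)
next
  case GLb
  have "tmul antipode id (delta_twist_gen g) = L * Kb + K * Lb" by (simp add: GLb tmul_eval)
  also have "\<dots> \<approx> 0 + 0" by (intro cong_add L_Kb K_Lb)
  finally show ?thesis by (simp add: GLb)
next
  case GE
  have "tmul antipode id (delta_twist_gen g) = E - E * ((Kb + Lb) * (K + L))"
    by (simp add: GE tmul_eval algebra_simps)
  also have "\<dots> \<approx> E - E * 1" by (intro cong_diff cong_refl cong_lmult inverse_left)
  finally show ?thesis by (simp add: GE)
next
  case GF
  then show ?thesis by (simp add: tmul_eval algebra_simps)
qed

lemma id_antipode_twist_gen: "tmul id antipode (delta_twist_gen g) \<approx> cst (eps_gen g)"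
proof (cases g)
  case GK
  have "tmul id antipode (delta_twist_gen g) = projK + projL"
    by (simp add: GK tmul_eval projK_def projL_def)
  also have "\<dots> \<approx> 1" by (rule projK_projL_sum)
  finally show ?thesis by (simp add: GK)
next
  case GKb
  have "tmul id antipode (delta_twist_gen g) = Kb * K + Lb * L" by (simp add: GKb tmul_eval)
  also have "\<dots> \<approx> projK + projL" by (intro cong_add Kb_K Lb_L)
  also have "\<dots> \<approx> 1" by (rule projK_projL_sum)
  finally show ?thesis by (simp add: GKb)
next
  case GL
  have "tmul id antipode (delta_twist_gen g) = L * Kb + K * Lb" by (simp add: GL tmul_eval)
  also have "\<dots> \<approx> 0 + 0" by (intro cong_add L_Kb K_Lb)
  finally show ?thesis by (simp add: GL)
next
  case GLb
  have "tmul id antipode (delta_twist_gen g) = Lb * K + Kb * L" by (simp add: GLb tmul_eval)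
  also have "\<dots> \<approx> 0 + 0" by (intro cong_add Lb_K Kb_L)
  finally show ?thesis by (simp add: GLb)
next
  case GE
  then show ?thesis by (simp add: tmul_eval algebra_simps)
next
  case GF
  have "tmul id antipode (delta_twist_gen g) = F - ((Kb + Lb) * (K + L)) * F"
    by (simp add: GF tmul_eval algebra_simps)
  also have "\<dots> \<approx> F - 1 * F" by (intro cong_diff cong_refl cong_rmult inverse_left)
  finally show ?thesis by (simp add: GF)
qed

lemma antipode_id_twist_word:
  "conv Delta_twist antipode id (basis_vec (Wd xs)) \<approx> cst (prod_list (map eps_gen xs))"
proof (induction xs rule: rev_induct)
  case Nil
  have one: "tmul antipode id (tens 1 1) = 1"
    by (simp only: tmul_tens[OF is_linear_antipode is_linear_id] antipode_one id_apply mult_1)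
  show ?case unfolding conv_eq_tmul basis_vec_Nil Delta_twist_one one by simp
next
  case (snoc g xs)
  have "conv Delta_twist antipode id (basis_vec (Wd (xs @ [g])))
      = tmul antipode id (Delta_twist (basis_vec (Wd xs)) * delta_twist_gen g)"
    by (simp add: conv_eq_tmul basis_vec_snoc Delta_twist_mult Delta_twist_gn)
  also have "\<dots> \<approx> cst (prod_list (map eps_gen xs)) * tmul antipode id (delta_twist_gen g)"
    using snoc unfolding conv_eq_tmul
    by (rule tmul_mult_central_left[OF antimult_on_words_antipode is_linear_antipode
          mult_on_words_id is_linear_id _ central_cst])
  also have "\<dots> \<approx> cst (prod_list (map eps_gen xs)) * cst (eps_gen g)"
    by (rule cong_lmult[OF antipode_id_twist_gen])
  finally show ?case
    by (simp only: cst_mult map_append prod_list.append list.map prod_list.Cons prod_list.Nil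
        mult_1_right)
qed

lemma id_antipode_twist_word:
  "conv Delta_twist id antipode (basis_vec (Wd xs)) \<approx> cst (prod_list (map eps_gen xs))"
proof (induction xs)
  case Nil
  have one: "tmul id antipode (tens 1 1) = 1"
    by (simp only: tmul_tens[OF is_linear_id is_linear_antipode] antipode_one id_apply mult_1)
  show ?case unfolding conv_eq_tmul basis_vec_Nil Delta_twist_one one by simp
next
  case (Cons g xs)
  have "conv Delta_twist id antipode (basis_vec (Wd (g # xs)))
      = tmul id antipode (delta_twist_gen g * Delta_twist (basis_vec (Wd xs)))"
    by (simp add: conv_eq_tmul basis_vec_Cons Delta_twist_mult Delta_twist_gn)
  also have "\<dots> \<approx> tmul id antipode (delta_twist_gen g) * cst (prod_list (map eps_gen xs))"
    using Cons unfolding conv_eq_tmul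
    by (rule tmul_mult_central_right[OF mult_on_words_id is_linear_id
          antimult_on_words_antipode is_linear_antipode _ central_cst])
  also have "\<dots> \<approx> cst (eps_gen g) * cst (prod_list (map eps_gen xs))"
    by (rule cong_rmult[OF id_antipode_twist_gen])
  finally show ?case
    by (simp only: cst_mult map_append prod_list.append list.map prod_list.Cons prod_list.Nil
        mult_1_right)
qed

theorem twist_antipode_left: "conv Delta_twist antipode id x \<approx> eta (eps x)"
  by (rule cong_linearI[OF is_linear_conv[OF is_linear_Delta_twist] is_linear_eta_eps])
     (metis letters.cases antipode_id_twist_word eta_eps_word)

theorem twist_antipode_right: "conv Delta_twist id antipode x \<approx> eta (eps x)"
  by (rule cong_linearI[OF is_linear_conv[OF is_linear_Delta_twist] is_linear_eta_eps])
     (metis letters.cases id_antipode_twist_word eta_eps_word)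

end

section \<open>\<open>U_{K,L,norm}\<close> is a von Neumann-Hopf algebra\<close>

text \<open>In \<open>U_{K,L,norm}\<close>, \<open>id \<star> T\<close> and \<open>T \<star> id\<close> are not the unit-counit composite but the
  algebra homomorphism \<open>\<chi>\<close> sending \<open>K, Kb\<close> to \<open>K Kb\<close>, \<open>L, Lb\<close> to \<open>L Lb\<close> and \<open>E, F\<close> to 0.
  Its values are central, so \<open>\<chi> \<star> id\<close> is multiplicative and \<open>\<chi> \<star> T\<close> antimultiplicative;
  checking them on generators gives \<open>\<chi> \<star> id = id\<close> and \<open>\<chi> \<star> T = T\<close>.\<close>

fun chi_gen :: "gen \<Rightarrow> fa" where
  "chi_gen GK = projK" | "chi_gen GKb = projK" | "chi_gen GL = projL" | "chi_gen GLb = projL"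
| "chi_gen GE = 0" | "chi_gen GF = 0"

definition chi :: "fa \<Rightarrow> fa" where "chi = hom_ext chi_gen"

lemma is_linear_chi: "is_linear chi" by (simp add: chi_def is_linear_hom_ext)
lemma mult_on_words_chi: "mult_on_words chi" by (simp add: chi_def mult_on_words_hom_ext)
lemma chi_gn [simp]: "chi (gn g) = chi_gen g" by (simp add: chi_def hom_ext_gn)
lemma chi_one [simp]: "chi 1 = 1" by (simp add: chi_def hom_ext_one)
lemma chi_mult: "chi (a * b) = chi a * chi b" by (simp add: chi_def hom_ext_mult)

lemmas tmul_chi_eval = tmul_eval is_linear_add[OF is_linear_chi]
  tmul_tens[OF is_linear_chi is_linear_id] tmul_tens[OF is_linear_chi is_linear_antipode]

context kl_relations
begin

text \<open>The generator computations need only the common relations.\<close>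
lemma id_antipode_norm_gen: "tmul id antipode (delta_norm_gen g) \<approx> chi_gen g"
proof (cases g)
  case GK
  show ?thesis by (simp add: GK tmul_eval projK_def)
next
  case GKb
  show ?thesis using Kb_K by (simp add: GKb tmul_eval)
next
  case GL
  have "tmul id antipode (delta_norm_gen g) = projL + L * Kb + K * Lb"
    by (simp add: GL tmul_eval projL_def)
  also have "\<dots> \<approx> projL + 0 + 0" by (intro cong_add cong_refl L_Kb K_Lb)
  finally show ?thesis by (simp add: GL)
next
  case GLb
  have "tmul id antipode (delta_norm_gen g) = Lb * L + Lb * K + Kb * L" by (simp add: GLb tmul_eval)
  also have "\<dots> \<approx> projL + 0 + 0" by (intro cong_add Lb_L Lb_K Kb_L)
  finally show ?thesis by (simp add: GLb)
next
  case GE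
  then show ?thesis by (simp add: tmul_eval algebra_simps)
next
  case GF
  have "tmul id antipode (delta_norm_gen g) = F - ((Kb + Lb) * (K + L)) * F"
    by (simp add: GF tmul_eval algebra_simps)
  also have "\<dots> \<approx> F - 1 * F" by (intro cong_diff cong_refl cong_rmult inverse_left)
  finally show ?thesis by (simp add: GF)
qed

lemma antipode_id_norm_gen: "tmul antipode id (delta_norm_gen g) \<approx> chi_gen g"
proof (cases g)
  case GK
  show ?thesis using Kb_K by (simp add: GK tmul_eval)
next
  case GKb
  show ?thesis by (simp add: GKb tmul_eval projK_def)
next
  case GL
  have "tmul antipode id (delta_norm_gen g) = Lb * L + Lb * K + Kb * L" by (simp add: GL tmul_eval)
  also have "\<dots> \<approx> projL + 0 + 0" by (intro cong_add Lb_L Lb_K Kb_L)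
  finally show ?thesis by (simp add: GL)
next
  case GLb
  have "tmul antipode id (delta_norm_gen g) = projL + L * Kb + K * Lb"
    by (simp add: GLb tmul_eval projL_def)
  also have "\<dots> \<approx> projL + 0 + 0" by (intro cong_add cong_refl L_Kb K_Lb)
  finally show ?thesis by (simp add: GLb)
next
  case GE
  have "tmul antipode id (delta_norm_gen g) = E - E * ((Kb + Lb) * (K + L))"
    by (simp add: GE tmul_eval algebra_simps)
  also have "\<dots> \<approx> E - E * 1" by (intro cong_diff cong_refl cong_lmult inverse_left)
  finally show ?thesis by (simp add: GE)
next
  case GF
  then show ?thesis by (simp add: tmul_eval algebra_simps)
qed

lemma chi_id_norm_gen: "tmul chi id (delta_norm_gen g) \<approx> gn g"
proof (cases g)
  case GK
  show ?thesis using projK_K by (simp add: GK tmul_chi_eval)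
next
  case GKb
  show ?thesis using projK_Kb by (simp add: GKb tmul_chi_eval)
next
  case GL
  have "tmul chi id (delta_norm_gen g) = projL * L + projL * K + projK * L"
    by (simp add: GL tmul_chi_eval)
  also have "\<dots> \<approx> L + 0 + 0" by (intro cong_add projL_L projL_K projK_L)
  finally show ?thesis by (simp add: GL)
next
  case GLb
  have "tmul chi id (delta_norm_gen g) = projL * Lb + projL * Kb + projK * Lb"
    by (simp add: GLb tmul_chi_eval)
  also have "\<dots> \<approx> Lb + 0 + 0" by (intro cong_add projL_Lb projL_Kb projK_Lb)
  finally show ?thesis by (simp add: GLb)
next
  case GE
  then show ?thesis by (simp add: tmul_chi_eval)
next
  case GF
  have "tmul chi id (delta_norm_gen g) = (projK + projL) * F"
    by (simp add: GF tmul_chi_eval algebra_simps)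
  also have "\<dots> \<approx> 1 * F" by (intro cong_rmult projK_projL_sum)
  finally show ?thesis by (simp add: GF)
qed

lemma chi_antipode_norm_gen: "tmul chi antipode (delta_norm_gen g) \<approx> S_gen g"
proof (cases g)
  case GK
  show ?thesis using projK_Kb by (simp add: GK tmul_chi_eval)
next
  case GKb
  show ?thesis using projK_K by (simp add: GKb tmul_chi_eval)
next
  case GL
  have "tmul chi antipode (delta_norm_gen g) = projL * Lb + projL * Kb + projK * Lb"
    by (simp add: GL tmul_chi_eval)
  also have "\<dots> \<approx> Lb + 0 + 0" by (intro cong_add projL_Lb projL_Kb projK_Lb)
  finally show ?thesis by (simp add: GL)
next
  case GLb
  have "tmul chi antipode (delta_norm_gen g) = projL * L + projL * K + projK * L"
    by (simp add: GLb tmul_chi_eval)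
  also have "\<dots> \<approx> L + 0 + 0" by (intro cong_add projL_L projL_K projK_L)
  finally show ?thesis by (simp add: GLb)
next
  case GE
  then show ?thesis by (simp add: tmul_chi_eval)
next
  case GF
  have "tmul chi antipode (delta_norm_gen g) = (projK + projL) * (- ((K + L) * F))"
    by (simp add: GF tmul_chi_eval algebra_simps)
  also have "\<dots> \<approx> 1 * (- ((K + L) * F))" by (intro cong_rmult projK_projL_sum)
  finally show ?thesis by (simp add: GF)
qed

lemma commute_product:
  assumes x: "X * G \<approx> cst a * (G * X')" and y: "Y * G \<approx> cst b * (G * Y')" and ab: "b * a = 1"
  shows "X * Y * G \<approx> G * (X' * Y')"
proof -
  have "X * Y * G = X * (Y * G)" by (simp add: mult.assoc)
  also have "\<dots> \<approx> X * (cst b * (G * Y'))" by (rule cong_lmult[OF y])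
  also have "\<dots> = cst b * ((X * G) * Y')" by (simp add: cst_left_commute mult.assoc)
  also have "\<dots> \<approx> cst b * ((cst a * (G * X')) * Y')" by (rule cong_lmult[OF cong_rmult[OF x]])
  also have "\<dots> = cst (b * a) * (G * (X' * Y'))" by (simp add: mult.assoc cst_cst)
  finally show ?thesis by (simp add: ab)
qed

end

context kl_norm
begin

text \<open>In the normal algebra \<open>K Kb\<close> and \<open>L Lb\<close> commute with \<open>E\<close> and \<open>F\<close> (the \<open>q\<close>-factors
  of \<open>K\<close> and \<open>Kb\<close> cancel), hence are central; so are all values of \<open>\<chi>\<close>.\<close>
lemma central_projK: "central projK"
proof (rule central_gen)
  fix g show "projK * gn g \<approx> gn g * projK"
  proof (cases g)
    case GK then show ?thesis using cong_trans[OF projK_K cong_sym[OF K_projK]] by simp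
  next
    case GKb then show ?thesis using cong_trans[OF projK_Kb cong_sym[OF Kb_projK]] by simp
  next
    case GL then show ?thesis using cong_trans[OF projK_L cong_sym[OF L_projK]] by simp
  next
    case GLb then show ?thesis using cong_trans[OF projK_Lb cong_sym[OF Lb_projK]] by simp
  next
    case GE then show ?thesis
      using commute_product[OF K_E Kb_E q_sq_inverse_left] by (simp add: projK_def)
  next
    case GF then show ?thesis
      using commute_product[OF K_F Kb_F q_sq_inverse_right] by (simp add: projK_def)
  qed
qed

lemma central_projL: "central projL"
proof (rule central_gen)
  fix g show "projL * gn g \<approx> gn g * projL"
  proof (cases g)
    case GK then show ?thesis using cong_trans[OF projL_K cong_sym[OF K_projL]] by simp
  next
    case GKb then show ?thesis using cong_trans[OF projL_Kb cong_sym[OF Kb_projL]] by simp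
  next
    case GL then show ?thesis using cong_trans[OF projL_L cong_sym[OF L_projL]] by simp
  next
    case GLb then show ?thesis using cong_trans[OF projL_Lb cong_sym[OF Lb_projL]] by simp
  next
    case GE then show ?thesis
      using commute_product[OF L_E Lb_E q_sq_inverse_left] by (simp add: projL_def)
  next
    case GF then show ?thesis
      using commute_product[OF L_F Lb_F q_sq_inverse_right] by (simp add: projL_def)
  qed
qed

lemma central_chi: "central (chi (basis_vec w))"
proof -
  have "central (prod_list (map chi_gen xs))" for xs
  proof (induction xs)
    case (Cons g xs)
    have "central (chi_gen g)"
      by (cases g) (simp_all add: central_projK central_projL central_zero)
    then show ?case using Cons by (simp add: central_mult)
  qed (simp add: central_one)
  then show ?thesis by (simp add: chi_def hom_ext_eq)
qed

end

context kl_norm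
begin

lemma id_antipode_norm: "conv Delta_norm id antipode (basis_vec w) \<approx> chi (basis_vec w)"
proof -
  have "conv Delta_norm id antipode (basis_vec (Wd xs)) \<approx> chi (basis_vec (Wd xs))" for xs
  proof (induction xs)
    case Nil
    have one: "tmul id antipode (tens 1 1) = 1"
      by (simp only: tmul_tens[OF is_linear_id is_linear_antipode] antipode_one id_apply mult_1)
    show ?case unfolding conv_eq_tmul basis_vec_Nil Delta_norm_one one by simp
  next
    case (Cons g xs)
    have "conv Delta_norm id antipode (basis_vec (Wd (g # xs)))
        = tmul id antipode (delta_norm_gen g * Delta_norm (basis_vec (Wd xs)))"
      by (simp add: conv_eq_tmul basis_vec_Cons Delta_norm_mult Delta_norm_gn)
    also have "\<dots> \<approx> tmul id antipode (delta_norm_gen g) * chi (basis_vec (Wd xs))"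
      using Cons unfolding conv_eq_tmul
      by (rule tmul_mult_central_right[OF mult_on_words_id is_linear_id
            antimult_on_words_antipode is_linear_antipode _ central_chi])
    also have "\<dots> \<approx> chi_gen g * chi (basis_vec (Wd xs))"
      by (rule cong_rmult[OF id_antipode_norm_gen])
    finally show ?case by (simp only: basis_vec_Cons chi_mult chi_gn)
  qed
  then show ?thesis by (cases w) simp
qed

lemma antipode_id_norm: "conv Delta_norm antipode id (basis_vec w) \<approx> chi (basis_vec w)"
proof -
  have "conv Delta_norm antipode id (basis_vec (Wd xs)) \<approx> chi (basis_vec (Wd xs))" for xs
  proof (induction xs rule: rev_induct)
    case Nil
    have one: "tmul antipode id (tens 1 1) = 1"
      by (simp only: tmul_tens[OF is_linear_antipode is_linear_id] antipode_one id_apply mult_1)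
    show ?case unfolding conv_eq_tmul basis_vec_Nil Delta_norm_one one by simp
  next
    case (snoc g xs)
    have "conv Delta_norm antipode id (basis_vec (Wd (xs @ [g])))
        = tmul antipode id (Delta_norm (basis_vec (Wd xs)) * delta_norm_gen g)"
      by (simp add: conv_eq_tmul basis_vec_snoc Delta_norm_mult Delta_norm_gn)
    also have "\<dots> \<approx> chi (basis_vec (Wd xs)) * tmul antipode id (delta_norm_gen g)"
      using snoc unfolding conv_eq_tmul
      by (rule tmul_mult_central_left[OF antimult_on_words_antipode is_linear_antipode
            mult_on_words_id is_linear_id _ central_chi])
    also have "\<dots> \<approx> chi (basis_vec (Wd xs)) * chi_gen g"
      by (rule cong_lmult[OF antipode_id_norm_gen])
    finally show ?case by (simp only: basis_vec_snoc chi_mult chi_gn)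
  qed
  then show ?thesis by (cases w) simp
qed

lemma chi_id_norm_word: "tmul chi id (Delta_norm (basis_vec (Wd xs))) \<approx> basis_vec (Wd xs)"
proof (induction xs)
  case Nil
  have one: "tmul chi id (tens 1 1) = 1"
    by (simp only: tmul_tens[OF is_linear_chi is_linear_id] chi_one id_apply mult_1)
  show ?case unfolding basis_vec_Nil Delta_norm_one one by simp
next
  case (Cons g xs)
  have "tmul chi id (Delta_norm (basis_vec (Wd (g # xs))))
      = tmul chi id (delta_norm_gen g * Delta_norm (basis_vec (Wd xs)))"
    by (simp add: basis_vec_Cons Delta_norm_mult Delta_norm_gn)
  also have "\<dots> \<approx> tmul chi id (delta_norm_gen g) * tmul chi id (Delta_norm (basis_vec (Wd xs)))"
    by (rule tmul_mult_of_central[OF mult_on_words_chi is_linear_chi central_chi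
          mult_on_words_id is_linear_id])
  also have "\<dots> \<approx> gn g * basis_vec (Wd xs)"
    by (rule cong_mult[OF chi_id_norm_gen Cons])
  finally show ?case by (simp only: basis_vec_Cons)
qed

lemma chi_antipode_norm_word:
  "tmul chi antipode (Delta_norm (basis_vec (Wd xs))) \<approx> antipode (basis_vec (Wd xs))"
proof (induction xs)
  case Nil
  have one: "tmul chi antipode (tens 1 1) = 1"
    by (simp only: tmul_tens[OF is_linear_chi is_linear_antipode] chi_one antipode_one mult_1)
  show ?case unfolding basis_vec_Nil Delta_norm_one one by simp
next
  case (Cons g xs)
  have "tmul chi antipode (Delta_norm (basis_vec (Wd (g # xs))))
      = tmul chi antipode (delta_norm_gen g * Delta_norm (basis_vec (Wd xs)))"
    by (simp add: basis_vec_Cons Delta_norm_mult Delta_norm_gn)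
  also have "\<dots> \<approx> tmul chi antipode (Delta_norm (basis_vec (Wd xs))) * tmul chi antipode (delta_norm_gen g)"
    by (rule tmul_antimult_of_central[OF mult_on_words_chi is_linear_chi central_chi
          antimult_on_words_antipode is_linear_antipode])
  also have "\<dots> \<approx> antipode (basis_vec (Wd xs)) * S_gen g"
    by (rule cong_mult[OF Cons chi_antipode_norm_gen])
  finally show ?case by (simp only: basis_vec_Cons antipode_mult antipode_gn)
qed

theorem norm_regular_id: "conv Delta_norm (conv Delta_norm id antipode) id x \<approx> x"
proof -
  have "conv Delta_norm (conv Delta_norm id antipode) id x \<approx> id x"
  proof (rule cong_linearI[OF is_linear_conv[OF is_linear_Delta_norm] is_linear_id])
    fix k :: word
    have "conv Delta_norm (conv Delta_norm id antipode) id (basis_vec k)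
        \<approx> tmul chi id (Delta_norm (basis_vec k))"
      unfolding conv_eq_tmul[of _ "conv Delta_norm id antipode"] tmul_def
      by (rule cong_linear_ext) (simp add: cong_rmult[OF id_antipode_norm])
    also have "\<dots> \<approx> basis_vec k" by (cases k) (simp only: chi_id_norm_word)
    finally show "conv Delta_norm (conv Delta_norm id antipode) id (basis_vec k) \<approx> id (basis_vec k)"
      by simp
  qed
  then show ?thesis by simp
qed

theorem norm_regular_antipode:
  "conv Delta_norm (conv Delta_norm antipode id) antipode x \<approx> antipode x"
proof (rule cong_linearI[OF is_linear_conv[OF is_linear_Delta_norm] is_linear_antipode])
  fix k :: word
  have "conv Delta_norm (conv Delta_norm antipode id) antipode (basis_vec k)
      \<approx> tmul chi antipode (Delta_norm (basis_vec k))"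
    unfolding conv_eq_tmul[of _ "conv Delta_norm antipode id"] tmul_def
    by (rule cong_linear_ext) (simp add: cong_rmult[OF antipode_id_norm])
  also have "\<dots> \<approx> antipode (basis_vec k)" by (cases k) (simp only: chi_antipode_norm_word)
  finally show "conv Delta_norm (conv Delta_norm antipode id) antipode (basis_vec k)
      \<approx> antipode (basis_vec k)" .
qed

end

theorem mainTheorem11:
  fixes q :: complex
  assumes "q \<noteq> 0" and "q \<noteq> 1" and "q \<noteq> -1"
  shows
    "((\<forall>a\<in>I_twist q. antipode a \<in> I_twist q)
      \<and> (\<forall>x. conv Delta_twist antipode id x - eta (eps x) \<in> I_twist q)
      \<and> (\<forall>x. conv Delta_twist id antipode x - eta (eps x) \<in> I_twist q))
   \<and> ((\<forall>a\<in>I_norm q. antipode a \<in> I_norm q)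
      \<and> (\<forall>x. conv Delta_norm (conv Delta_norm id antipode) id x - x \<in> I_norm q)
      \<and> (\<forall>x. conv Delta_norm (conv Delta_norm antipode id) antipode x - antipode x \<in> I_norm q))"
proof -
  interpret twist: kl_twist "twist_rels q" q
    by unfold_locales (auto simp: assms(1) twist_rels_def)
  interpret norm: kl_norm "norm_rels q" q
    by unfold_locales (auto simp: assms(1) norm_rels_def)
  have "\<forall>a\<in>I_twist q. antipode a \<in> I_twist q"
    unfolding I_twist_def using twist.antipode_ideal_gen[OF twist.antipode_twist_rels] by blast
  moreover have "\<forall>a\<in>I_norm q. antipode a \<in> I_norm q"
    unfolding I_norm_def using norm.antipode_ideal_gen[OF norm.antipode_norm_rels] by blast
  ultimately show ?thesis
    using twist.twist_antipode_left twist.twist_antipode_right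
      norm.norm_regular_id norm.norm_regular_antipode
    by (simp add: I_twist_def I_norm_def cong_mod_def)
qed

end
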